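(* Suppose the assumptions on $F$, $\xi$ and $\pi$ below hold, and fix $\varepsilon>0$, $\sigma>0$. Let $a:\mathcal P(\mathcal X)\times\mathcal X\to\mathbb R$ be any one of the following four functions: (1) $a(\mu,x)=\frac{\delta F}{\delta\mu}(\mu,x)+\sigma\log\frac{(K_\varepsilon*\mu)(x)}{\pi(x)}-\sigma\,\mathrm{KL}(K_\varepsilon*\mu\,|\,\pi)$; (2) $a(\mu,x)=\frac{\delta F}{\delta\mu}(\mu,x)+\sigma\log\frac{(K_\varepsilon*\mu)(x)}{(K_\varepsilon*\pi)(x)}-\sigma\,\mathrm{KL}(K_\varepsilon*\mu\,|\,K_\varepsilon*\pi)$; (3) $a(\mu,x)=\frac{\delta F}{\delta\mu}(\mu,x)+\sigma\Big(\log\frac{(K_\varepsilon*\mu)(x)}{\pi(x)}+\int_{\mathcal X}\frac{K_\varepsilon(x-y)}{(K_\varepsilon*\mu)(y)}\mu(dy)-\int_{\mathcal X}\log\frac{(K_\varepsilon*\mu)(z)}{\pi(z)}\mu(dz)-1\Big)$; (4) $a(\mu,x)=\frac{\delta F}{\delta\mu}(\mu,x)+\sigma\Big(K_\varepsilon*\log\frac{K_\varepsilon*\mu}{\pi}\Big)(x)-\sigma\,\mathrm{KL}(K_\varepsilon*\mu\,|\,\pi)$. Then there exist constants $M_a,L_a>0$ (depending on $\varepsilon,\sigma,d,\mathcal X,\xi,\pi,F$) such that $|a(m,x)|\le M_a$ and $|a(m,x)-a(m',y)|\le L_a(|x-y|+\mathcal W_2(m,m'))$ for all $x,y\in\mathcal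 X$ and $m,m'\in\mathcal P_2(\mathcal X)$.
   Context: $\mathcal X\subset\mathbb R^d$ is compact; $\mathcal W_p$ is the $p$-Wasserstein distance. Flat derivative: $F:\mathcal P(\mathcal X)\to\mathbb R$ admits a flat derivative $\frac{\delta F}{\delta\mu}:\mathcal P(\mathcal X)\times\mathcal X\to\mathbb R$ if it is continuous in the measure argument, suitably bounded, and $F(m')-F(m)=\int_0^1\int_{\mathcal X}\frac{\delta F}{\delta\mu}(m+\lambda(m'-m),x)(m'-m)(dx)\,d\lambda$ for all $m,m'$. Assumption on $F$: $F$ is lower semicontinuous w.r.t. weak convergence, bounded below by some $F_{\min}$, admits a flat derivative with $|\frac{\delta F}{\delta\mu}(\mu,x)|\le C_F$ and $|\frac{\delta F}{\delta\mu}(\mu,x)-\frac{\delta F}{\delta\mu}(\nu,y)|\le L_F(\mathcal W_2(\mu,\nu)+|x-y|)$ for all $\mu,\nu,x,y$. Assumption on the kernel: $\xi:\mathbb R^d\to\mathbb R_+$ is a smooth, Lipschitz, radial probability density with full support and finite second moment; $\xi_\varepsilon(z):=C_{\varepsilon,d}^{-1}\varepsilon^{-d}\xi(z/\varepsilon)$ where $C_{\varepsilon,d}=\int_{\mathcal X}\varepsilon^{-d}\xi(x/\varepsilon)dx$; $K_\varepsilon:=\xi_\varepsilon*\xi_\varepsilon$. For a measure $\mu$ on $\mathcal X$, $(K_\varepsilon*\mu)(x)=\int_{\mathcal X}K_\varepsilon(x-y)\mu(dy)$, and for a function $f$ on $\mathcal X$, $(K_\varepsilon*f)(x)=\int_{\mathcal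 X}K_\varepsilon(x-y)f(y)dy$. Assumption on $\pi$: $\pi$ is a probability density on $\mathcal X$ (w.r.t. Lebesgue measure), $\pi=e^{-U}$ with $U:\mathcal X\to\mathbb R$ continuous, and $\pi$ is Lipschitz on $\mathcal X$. For positive densities $p,q$ on $\mathcal X$, $\mathrm{KL}(p\,|\,q)=\int_{\mathcal X}p\log(p/q)\,dx$. *)

theory Defs
  imports "HOL-Analysis.Analysis" "HOL-Probability.Probability"
begin

definition probs :: "'a::euclidean_space set \<Rightarrow> 'a measure set" where
  "probs X = {\<mu>. prob_space \<mu> \<and> sets \<mu> = sets (borel :: 'a measure) \<and> emeasure \<mu> (UNIV - X) = 0}"

definition probs2 :: "'a::euclidean_space set \<Rightarrow> 'a measure set" where
  "probs2 X = {\<mu> \<in> probs X. integrable \<mu> (\<lambda>x. (norm x)^2)}"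

definition couplings :: "'a::euclidean_space measure \<Rightarrow> 'a measure \<Rightarrow> ('a \<times> 'a) measure set" where
  "couplings \<mu> \<nu> = {\<gamma>. prob_space \<gamma> \<and> sets \<gamma> = sets (borel \<Otimes>\<^sub>M borel :: ('a \<times> 'a) measure)
      \<and> distr \<gamma> borel fst = \<mu> \<and> distr \<gamma> borel snd = \<nu>}"

definition W2 :: "'a::euclidean_space measure \<Rightarrow> 'a measure \<Rightarrow> real" where
  "W2 \<mu> \<nu> = sqrt (enn2real (INF \<gamma>\<in>couplings \<mu> \<nu>.
       \<integral>\<^sup>+ p. ennreal ((dist (fst p) (snd p))^2) \<partial>\<gamma>))"

definition weak_conv_meas :: "(nat \<Rightarrow> 'a::euclidean_space measure) \<Rightarrow> 'a measure \<Rightarrow> bool" where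
  "weak_conv_meas \<mu>s \<mu> \<longleftrightarrow> (\<forall>f::'a \<Rightarrow> real. continuous_on UNIV f \<and> bounded (range f) \<longrightarrow>
      (\<lambda>n. \<integral>x. f x \<partial>(\<mu>s n)) \<longlonglongrightarrow> (\<integral>x. f x \<partial>\<mu>))"

text \<open>Convex combination m + l (m' - m) = (1 - l) m + l m'.\<close>
definition mix :: "real \<Rightarrow> 'a::euclidean_space measure \<Rightarrow> 'a measure \<Rightarrow> 'a measure" where
  "mix l m m' = measure_of UNIV (sets (borel :: 'a measure))
      (\<lambda>A. ennreal (1 - l) * emeasure m A + ennreal l * emeasure m' A)"

definition flat_derivative ::
  "'a::euclidean_space set \<Rightarrow> ('a measure \<Rightarrow> real) \<Rightarrow> ('a measure \<Rightarrow> 'a \<Rightarrow> real) \<Rightarrow> bool" where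
  "flat_derivative X F dF \<longleftrightarrow>
     (\<forall>x\<in>X. \<forall>\<mu>s \<mu>. (\<forall>n. \<mu>s n \<in> probs X) \<and> \<mu> \<in> probs X \<and> weak_conv_meas \<mu>s \<mu> \<longrightarrow>
         (\<lambda>n. dF (\<mu>s n) x) \<longlonglongrightarrow> dF \<mu> x) \<and>
     (\<forall>m\<in>probs X. \<forall>m'\<in>probs X.
        F m' - F m = integral {0..1} (\<lambda>l. (\<integral>x. dF (mix l m m') x \<partial>m') - (\<integral>x. dF (mix l m m') x \<partial>m)))"

text \<open>C-infinity smoothness: a family of continuous iterated directional derivatives.\<close>
definition smooth_fun :: "('a::euclidean_space \<Rightarrow> real) \<Rightarrow> bool" where
  "smooth_fun f \<longleftrightarrow> (\<exists>D :: 'a list \<Rightarrow> 'a \<Rightarrow> real. D [] = f \<and> (\<forall>vs. continuous_on UNIV (D vs)) \<and>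
      (\<forall>vs x. (D vs has_derivative (\<lambda>h. D (h # vs) x)) (at x)))"

definition xi_eps :: "('a::euclidean_space \<Rightarrow> real) \<Rightarrow> 'a set \<Rightarrow> real \<Rightarrow> 'a \<Rightarrow> real" where
  "xi_eps \<xi> X \<epsilon> z =
     (let C = (LINT x:X|lborel. \<xi> ((1/\<epsilon>) *\<^sub>R x) / \<epsilon> ^ DIM('a))
      in \<xi> ((1/\<epsilon>) *\<^sub>R z) / (C * \<epsilon> ^ DIM('a)))"

definition K_eps :: "('a::euclidean_space \<Rightarrow> real) \<Rightarrow> 'a set \<Rightarrow> real \<Rightarrow> 'a \<Rightarrow> real" where
  "K_eps \<xi> X \<epsilon> z = (\<integral>w. xi_eps \<xi> X \<epsilon> (z - w) * xi_eps \<xi> X \<epsilon> w \<partial>lborel)"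

definition conv_meas :: "('a::euclidean_space \<Rightarrow> real) \<Rightarrow> 'a set \<Rightarrow> 'a measure \<Rightarrow> 'a \<Rightarrow> real" where
  "conv_meas K X \<mu> x = (LINT y:X|\<mu>. K (x - y))"

definition conv_fun :: "('a::euclidean_space \<Rightarrow> real) \<Rightarrow> 'a set \<Rightarrow> ('a \<Rightarrow> real) \<Rightarrow> 'a \<Rightarrow> real" where
  "conv_fun K X f x = (LINT y:X|lborel. K (x - y) * f y)"

definition KL :: "'a::euclidean_space set \<Rightarrow> ('a \<Rightarrow> real) \<Rightarrow> ('a \<Rightarrow> real) \<Rightarrow> real" where
  "KL X p q = (LINT x:X|lborel. p x * ln (p x / q x))"

definition a1 where
  "a1 X dF \<sigma> K \<pi> \<mu> x = dF \<mu> x + \<sigma> * ln (conv_meas K X \<mu> x / \<pi> x)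
      - \<sigma> * KL X (conv_meas K X \<mu>) \<pi>"

definition a2 where
  "a2 X dF \<sigma> K \<pi> \<mu> x = dF \<mu> x + \<sigma> * ln (conv_meas K X \<mu> x / conv_fun K X \<pi> x)
      - \<sigma> * KL X (conv_meas K X \<mu>) (conv_fun K X \<pi>)"

definition a3 where
  "a3 X dF \<sigma> K \<pi> \<mu> x = dF \<mu> x + \<sigma> * (ln (conv_meas K X \<mu> x / \<pi> x)
      + (LINT y:X|\<mu>. K (x - y) / conv_meas K X \<mu> y)
      - (LINT z:X|\<mu>. ln (conv_meas K X \<mu> z / \<pi> z)) - 1)"

definition a4 where
  "a4 X dF \<sigma> K \<pi> \<mu> x = dF \<mu> x + \<sigma> * conv_fun K X (\<lambda>z. ln (conv_meas K X \<mu> z / \<pi> z)) x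
      - \<sigma> * KL X (conv_meas K X \<mu>) \<pi>"

end

(*
  Each drift a_i is built from dF, the target density pi, the smoothed density K_eps * mu, and
  integrals of such quantities against mu or against Lebesgue measure on X, using sums,
  products, logarithms and reciprocals.  Call Phi(mu, s) bounded W2-Lipschitz if it is uniformly
  bounded and |Phi(mu, s) - Phi(nu, t)| <= L (|s - t| + W2(mu, nu)).  This class is closed under
  all of these operations, provided ln and 1/_ are only applied to quantities bounded away
  from 0.  The only step where W2 genuinely enters is integration against mu itself, and there
  the Kantorovich bound |int f dmu - int f dnu| <= Lip(f) W2(mu, nu) holds by Cauchy-Schwarz on
  an arbitrary coupling.  The lower bounds come from the kernel: K_eps = xi_eps * xi_eps is
  Lipschitz and strictly positive because xi > 0 on a dense set, so on the compact set X both
  K_eps * mu and pi stay above a positive constant.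
*)
theory Submission
  imports Defs
begin

section \<open>Set integrals against probability measures concentrated on X\<close>

lemma probsD:
  assumes "\<mu> \<in> probs X"
  shows "prob_space \<mu>" "sets \<mu> = sets borel" "space \<mu> = UNIV" "emeasure \<mu> (UNIV - X) = 0"
  using assms unfolding probs_def by (auto dest: sets_eq_imp_space_eq)

lemma AE_in_probs:
  assumes "\<mu> \<in> probs X" "closed X"
  shows "AE x in \<mu>. x \<in> X"
proof (rule AE_I')
  have "open (UNIV - X)" using assms(2) by (simp add: open_Diff)
  then show "UNIV - X \<in> null_sets \<mu>" using probsD[OF assms(1)] by auto
qed (use probsD(3)[OF assms(1)] in auto)

lemma measure_probs:
  assumes "\<mu> \<in> probs X" "closed X"
  shows "measure \<mu> X = 1"
proof -
  interpret prob_space \<mu> by (rule probsD(1)[OF assms(1)])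
  have "X \<in> events" using probsD(2)[OF assms(1)] assms(2) by simp
  then show ?thesis
    using prob_Collect_eq_1[of "\<lambda>x. x \<in> X"] AE_in_probs[OF assms] probsD(3)[OF assms(1)]
    by simp
qed

lemma set_integrable_continuous_on_compact:
  fixes f :: "'a::euclidean_space \<Rightarrow> real"
  assumes "finite_measure M" "sets M = sets borel" "compact X" "continuous_on X f"
  shows "set_integrable M X f"
proof -
  interpret finite_measure M by fact
  obtain B where B: "\<And>x. x \<in> X \<Longrightarrow> \<bar>f x\<bar> \<le> B" "0 < B"
    using compact_imp_bounded[OF compact_continuous_image[OF assms(4,3)]]
    unfolding bounded_pos by auto
  have "(\<lambda>x. indicator X x *\<^sub>R f x) \<in> borel_measurable M"
    using borel_measurable_continuous_on_indicator[OF borel_compact[OF assms(3)] assms(4)]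
    by (simp add: measurable_cong_sets[OF assms(2) refl])
  then show ?thesis
    unfolding set_integrable_def
    by (rule integrable_const_bound[where B=B, rotated]) (use B in \<open>auto simp: indicator_def\<close>)
qed

lemma set_integral_ge_measure:
  fixes f :: "'a \<Rightarrow> real"
  assumes "set_integrable M A f" "A \<in> sets M" "emeasure M A \<noteq> \<infinity>"
    and "\<And>x. x \<in> A \<Longrightarrow> c \<le> f x"
  shows "c * measure M A \<le> (LINT x:A|M. f x)"
proof -
  have "set_integrable M A (\<lambda>_. c)"
    using assms(2,3) unfolding set_integrable_def by (simp add: less_top)
  then have "(LINT x:A|M. c) \<le> (LINT x:A|M. f x)"
    using assms(1,4) by (rule set_integral_mono)
  then show ?thesis using set_integral_const[OF assms(2,3), of c] by (simp add: mult.commute)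
qed

lemma abs_set_integral_le_measure:
  fixes f :: "'a \<Rightarrow> real"
  assumes "set_integrable M A f" "A \<in> sets M" "emeasure M A \<noteq> \<infinity>"
    and "\<And>x. x \<in> A \<Longrightarrow> \<bar>f x\<bar> \<le> c"
  shows "\<bar>LINT x:A|M. f x\<bar> \<le> c * measure M A"
proof -
  have "- c * measure M A \<le> (LINT x:A|M. f x)"
    using assms by (intro set_integral_ge_measure) (auto simp: abs_le_iff dest!: assms(4))
  moreover have "- c * measure M A \<le> (LINT x:A|M. - f x)"
    using assms set_integrable_mult_right[OF assms(1), of "-1"]
    by (intro set_integral_ge_measure) (auto simp: abs_le_iff)
  ultimately show ?thesis using set_integral_uminus[OF assms(1)] by linarith
qed

lemma
  fixes f :: "'a::euclidean_space \<Rightarrow> real"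
  assumes "compact X" "\<mu> \<in> probs X" "continuous_on X f"
  shows set_integrable_probs: "set_integrable \<mu> X f"
    and set_integral_probs_ge: "(\<And>x. x \<in> X \<Longrightarrow> c \<le> f x) \<Longrightarrow> c \<le> (LINT x:X|\<mu>. f x)"
    and abs_set_integral_probs_le:
      "(\<And>x. x \<in> X \<Longrightarrow> \<bar>f x\<bar> \<le> c) \<Longrightarrow> \<bar>LINT x:X|\<mu>. f x\<bar> \<le> c"
proof -
  interpret prob_space \<mu> by (rule probsD(1)[OF assms(2)])
  have X: "X \<in> sets \<mu>" "emeasure \<mu> X \<noteq> \<infinity>" "measure \<mu> X = 1"
    using probsD(2)[OF assms(2)] borel_compact[OF assms(1)]
      measure_probs[OF assms(2) compact_imp_closed[OF assms(1)]]
    by auto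
  show f: "set_integrable \<mu> X f"
    using probsD(2)[OF assms(2)] assms(1,3) finite_measure_axioms
    by (intro set_integrable_continuous_on_compact)
  show "c \<le> (LINT x:X|\<mu>. f x)" if "\<And>x. x \<in> X \<Longrightarrow> c \<le> f x"
    using set_integral_ge_measure[OF f X(1,2) that] X(3) by simp
  show "\<bar>LINT x:X|\<mu>. f x\<bar> \<le> c" if "\<And>x. x \<in> X \<Longrightarrow> \<bar>f x\<bar> \<le> c"
    using abs_set_integral_le_measure[OF f X(1,2) that] X(3) by simp
qed

section \<open>Couplings and the Kantorovich bound\<close>

definition transport_cost :: "('a::metric_space \<times> 'a) measure \<Rightarrow> ennreal" where
  "transport_cost \<gamma> = (\<integral>\<^sup>+ p. ennreal ((dist (fst p) (snd p))\<^sup>2) \<partial>\<gamma>)"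

definition mean_dist :: "('a::metric_space \<times> 'a) measure \<Rightarrow> ennreal" where
  "mean_dist \<gamma> = (\<integral>\<^sup>+ p. ennreal (dist (fst p) (snd p)) \<partial>\<gamma>)"

lemma W2_eq_transport_cost:
  "W2 \<mu> \<nu> = sqrt (enn2real (INF \<gamma>\<in>couplings \<mu> \<nu>. transport_cost \<gamma>))"
  unfolding W2_def transport_cost_def ..

lemma W2_nonneg: "0 \<le> W2 \<mu> \<nu>"
  unfolding W2_def by simp

lemma couplingsD:
  assumes "\<gamma> \<in> couplings \<mu> \<nu>"
  shows "prob_space \<gamma>" "sets \<gamma> = sets (borel \<Otimes>\<^sub>M borel)" "space \<gamma> = UNIV"
    "distr \<gamma> borel fst = \<mu>" "distr \<gamma> borel snd = \<nu>"
  using assms unfolding couplings_def by (auto simp: space_pair_measure dest: sets_eq_imp_space_eq)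

lemma measurable_couplings:
  assumes "\<gamma> \<in> couplings \<mu> \<nu>" "h \<in> borel \<Otimes>\<^sub>M borel \<rightarrow>\<^sub>M N"
  shows "h \<in> \<gamma> \<rightarrow>\<^sub>M N"
  using assms(2) by (simp add: measurable_cong_sets[OF couplingsD(2)[OF assms(1)] refl])

lemma AE_couplings:
  assumes "\<gamma> \<in> couplings \<mu> \<nu>" "\<mu> \<in> probs X" "\<nu> \<in> probs X" "closed X"
  shows "AE p in \<gamma>. fst p \<in> X \<and> snd p \<in> X"
proof -
  have "AE p in \<gamma>. fst p \<in> X"
    using AE_in_probs[OF assms(2,4)] couplingsD(4)[OF assms(1)]
    by (intro AE_distrD[where M'=borel and f=fst] measurable_couplings[OF assms(1)]) auto
  moreover have "AE p in \<gamma>. snd p \<in> X"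
    using AE_in_probs[OF assms(3,4)] couplingsD(5)[OF assms(1)]
    by (intro AE_distrD[where M'=borel and f=snd] measurable_couplings[OF assms(1)]) auto
  ultimately show ?thesis by eventually_elim simp
qed

lemma pair_measure_in_couplings:
  assumes "\<mu> \<in> probs X" "\<nu> \<in> probs X"
  shows "\<mu> \<Otimes>\<^sub>M \<nu> \<in> couplings \<mu> \<nu>"
proof -
  note \<mu> = probsD[OF assms(1)] and \<nu> = probsD[OF assms(2)]
  interpret \<mu>: prob_space \<mu> by (rule \<mu>(1))
  interpret \<nu>: prob_space \<nu> by (rule \<nu>(1))
  interpret pair_prob_space \<mu> \<nu> ..
  have "distr (\<mu> \<Otimes>\<^sub>M \<nu>) borel fst = distr (\<mu> \<Otimes>\<^sub>M \<nu>) \<mu> fst"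
    using \<mu>(2) by (intro distr_cong) auto
  also have "\<dots> = \<mu>" by (rule \<nu>.distr_pair_fst)
  finally have fst: "distr (\<mu> \<Otimes>\<^sub>M \<nu>) borel fst = \<mu>" .
  have "distr (\<mu> \<Otimes>\<^sub>M \<nu>) borel snd
      = distr (distr (\<nu> \<Otimes>\<^sub>M \<mu>) (\<mu> \<Otimes>\<^sub>M \<nu>) (\<lambda>(x, y). (y, x))) \<nu> snd"
    using \<nu>(2) by (subst distr_pair_swap[symmetric]) (intro distr_cong, auto)
  also have "\<dots> = distr (\<nu> \<Otimes>\<^sub>M \<mu>) \<nu> fst"
    by (subst distr_distr) (auto simp: comp_def split_beta)
  also have "\<dots> = \<nu>" by (rule \<mu>.distr_pair_fst)
  finally have snd: "distr (\<mu> \<Otimes>\<^sub>M \<nu>) borel snd = \<nu>" .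
  have "sets (\<mu> \<Otimes>\<^sub>M \<nu>) = sets (borel \<Otimes>\<^sub>M borel)"
    using \<mu>(2) \<nu>(2) by (intro sets_pair_measure_cong)
  with fst snd show ?thesis
    unfolding couplings_def by (auto intro: prob_space_axioms)
qed

lemma W2_self:
  assumes "\<mu> \<in> probs X"
  shows "W2 \<mu> \<mu> = 0"
proof -
  note \<mu> = probsD[OF assms]
  interpret prob_space \<mu> by (rule \<mu>(1))
  define \<delta> where "\<delta> = distr \<mu> (borel \<Otimes>\<^sub>M borel) (\<lambda>x. (x, x))"
  have diag: "(\<lambda>x. (x, x)) \<in> \<mu> \<rightarrow>\<^sub>M borel \<Otimes>\<^sub>M borel"
    by (simp add: measurable_cong_sets[OF \<mu>(2) refl])
  have "distr \<delta> borel f = \<mu>" if "f = fst \<or> f = snd" for f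
  proof -
    have "distr \<delta> borel f = distr \<mu> borel (f \<circ> (\<lambda>x. (x, x)))"
      unfolding \<delta>_def using that by (intro distr_distr[OF _ diag]) auto
    also have "\<dots> = \<mu>" using that distr_id2[of borel \<mu>] \<mu>(2) by (auto simp: comp_def)
    finally show ?thesis .
  qed
  then have "\<delta> \<in> couplings \<mu> \<mu>"
    unfolding couplings_def \<delta>_def by (auto intro: prob_space_distr[OF diag])
  moreover have "transport_cost \<delta> = 0"
    unfolding transport_cost_def \<delta>_def by (subst nn_integral_distr[OF diag]) auto
  ultimately have "(INF \<gamma>\<in>couplings \<mu> \<mu>. transport_cost \<gamma>) = 0"
    by (metis INF_lower bot.extremum_uniqueI bot_ennreal)
  then show ?thesis unfolding W2_eq_transport_cost by simp
qed

lemma transport_cost_finite: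
  assumes "compact X" "\<gamma> \<in> couplings \<mu> \<nu>" "\<mu> \<in> probs X" "\<nu> \<in> probs X"
  shows "transport_cost \<gamma> < \<infinity>"
proof -
  interpret prob_space \<gamma> by (rule couplingsD(1)[OF assms(2)])
  have "transport_cost \<gamma> \<le> (\<integral>\<^sup>+ p. ennreal ((diameter X)\<^sup>2) \<partial>\<gamma>)"
    unfolding transport_cost_def
    using AE_couplings[OF assms(2-4) compact_imp_closed[OF assms(1)]]
  proof (intro nn_integral_mono_AE, eventually_elim)
    case (elim p)
    then have "dist (fst p) (snd p) \<le> diameter X"
      by (intro diameter_bounded_bound compact_imp_bounded[OF assms(1)]) auto
    then show ?case by (intro ennreal_leI power_mono) auto
  qed
  also have "\<dots> < \<infinity>" by (simp add: emeasure_space_1)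
  finally show ?thesis .
qed

lemma le_W2I:
  assumes "0 \<le> r" "\<gamma>\<^sub>0 \<in> couplings \<mu> \<nu>" "transport_cost \<gamma>\<^sub>0 < \<infinity>"
    and "\<And>\<gamma>. \<gamma> \<in> couplings \<mu> \<nu> \<Longrightarrow> ennreal r \<le> mean_dist \<gamma>"
  shows "r \<le> W2 \<mu> \<nu>"
proof -
  define I where "I = (INF \<gamma>\<in>couplings \<mu> \<nu>. transport_cost \<gamma>)"
  have "ennreal (r\<^sup>2) \<le> transport_cost \<gamma>" if \<gamma>: "\<gamma> \<in> couplings \<mu> \<nu>" for \<gamma>
  proof -
    interpret prob_space \<gamma> by (rule couplingsD(1)[OF \<gamma>])
    have "ennreal (r\<^sup>2) = (ennreal r)\<^sup>2" by (simp add: ennreal_power assms(1))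
    also have "\<dots> \<le> (\<integral>\<^sup>+ p. ennreal (dist (fst p) (snd p)) * 1 \<partial>\<gamma>)\<^sup>2"
      using assms(4)[OF \<gamma>] unfolding mean_dist_def by (intro power_mono) auto
    also have "\<dots> \<le> (\<integral>\<^sup>+ p. (ennreal (dist (fst p) (snd p)))\<^sup>2 \<partial>\<gamma>) * (\<integral>\<^sup>+ p. 1\<^sup>2 \<partial>\<gamma>)"
      by (intro Cauchy_Schwarz_nn_integral measurable_couplings[OF \<gamma>]) auto
    also have "\<dots> = transport_cost \<gamma>"
      by (simp add: transport_cost_def emeasure_space_1 ennreal_power)
    finally show ?thesis .
  qed
  then have "ennreal (r\<^sup>2) \<le> I" unfolding I_def by (rule INF_greatest)
  moreover have "I < \<infinity>"
    unfolding I_def using INF_lower[OF assms(2)] assms(3) by (rule le_less_trans)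
  ultimately have "r\<^sup>2 \<le> enn2real I" using enn2real_mono by fastforce
  then show ?thesis
    unfolding W2_eq_transport_cost I_def[symmetric] using assms(1) real_le_rsqrt by blast
qed

lemma set_integral_diff_le_mean_dist:
  fixes f :: "'a::euclidean_space \<Rightarrow> real"
  assumes X: "compact X" and \<mu>: "\<mu> \<in> probs X" and \<nu>: "\<nu> \<in> probs X"
    and \<gamma>: "\<gamma> \<in> couplings \<mu> \<nu>" and f: "L-lipschitz_on X f"
  shows "ennreal \<bar>(LINT x:X|\<mu>. f x) - (LINT x:X|\<nu>. f x)\<bar> \<le> ennreal L * mean_dist \<gamma>"
proof -
  interpret prob_space \<gamma> by (rule couplingsD(1)[OF \<gamma>])
  define g where "g = (\<lambda>x. indicator X x * f x)"
  have f_cont: "continuous_on X f" by (rule lipschitz_on_continuous_on[OF f])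
  have g_meas: "g \<in> borel_measurable borel"
    unfolding g_def using borel_measurable_continuous_on_indicator[OF borel_compact[OF X] f_cont]
    by simp
  obtain B where B: "\<And>x. \<bar>g x\<bar> \<le> B"
    using compact_imp_bounded[OF compact_continuous_image[OF f_cont X]]
    unfolding bounded_pos g_def by (force simp: indicator_def)
  have g_int: "integrable \<gamma> (\<lambda>p. g (h p))" if "h = fst \<or> h = snd" for h
    using that B measurable_compose[OF measurable_couplings[OF \<gamma>] g_meas]
    by (intro integrable_const_bound[where B=B]) auto
  have "(LINT x:X|distr \<gamma> borel h. f x) = (\<integral>p. g (h p) \<partial>\<gamma>)" if "h = fst \<or> h = snd" for h
    unfolding set_lebesgue_integral_def using that
    by (subst integral_distr[OF measurable_couplings[OF \<gamma>] g_meas, symmetric]) (auto simp: g_def)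
  then have "\<bar>(LINT x:X|\<mu>. f x) - (LINT x:X|\<nu>. f x)\<bar> = \<bar>\<integral>p. g (fst p) - g (snd p) \<partial>\<gamma>\<bar>"
    using g_int couplingsD(4,5)[OF \<gamma>] by fastforce
  also have "\<dots> \<le> (\<integral>p. \<bar>g (fst p) - g (snd p)\<bar> \<partial>\<gamma>)" by (rule integral_abs_bound)
  finally have "ennreal \<bar>(LINT x:X|\<mu>. f x) - (LINT x:X|\<nu>. f x)\<bar>
                  \<le> (\<integral>\<^sup>+ p. ennreal \<bar>g (fst p) - g (snd p)\<bar> \<partial>\<gamma>)"
    using g_int by (subst nn_integral_eq_integral) (auto intro: ennreal_leI)
  also have "\<dots> \<le> (\<integral>\<^sup>+ p. ennreal L * ennreal (dist (fst p) (snd p)) \<partial>\<gamma>)"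
    using AE_couplings[OF \<gamma> \<mu> \<nu> compact_imp_closed[OF X]]
  proof (intro nn_integral_mono_AE, eventually_elim)
    case (elim p)
    then show ?case
      using lipschitz_onD[OF f, of "fst p" "snd p"] lipschitz_on_nonneg[OF f]
      by (simp add: g_def dist_real_def ennreal_mult[symmetric] ennreal_leI)
  qed
  also have "\<dots> = ennreal L * mean_dist \<gamma>"
    unfolding mean_dist_def by (intro nn_integral_cmult measurable_couplings[OF \<gamma>]) auto
  finally show ?thesis .
qed

theorem abs_set_integral_diff_le_W2:
  fixes f :: "'a::euclidean_space \<Rightarrow> real"
  assumes X: "compact X" and \<mu>: "\<mu> \<in> probs X" and \<nu>: "\<nu> \<in> probs X"
    and f: "L-lipschitz_on X f"
  shows "\<bar>(LINT x:X|\<mu>. f x) - (LINT x:X|\<nu>. f x)\<bar> \<le> L * W2 \<mu> \<nu>"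
proof -
  define \<Delta> where "\<Delta> = \<bar>(LINT x:X|\<mu>. f x) - (LINT x:X|\<nu>. f x)\<bar>"
  note coupling_bound = set_integral_diff_le_mean_dist[OF X \<mu> \<nu> _ f, folded \<Delta>_def]
  have \<gamma>\<^sub>0: "\<mu> \<Otimes>\<^sub>M \<nu> \<in> couplings \<mu> \<nu>" by (rule pair_measure_in_couplings[OF \<mu> \<nu>])
  show ?thesis
  proof (cases "L = 0")
    case True
    then show ?thesis using coupling_bound[OF \<gamma>\<^sub>0] by (simp add: \<Delta>_def)
  next
    case False
    then have L: "0 < L" using lipschitz_on_nonneg[OF f] by simp
    have "\<Delta> / L \<le> W2 \<mu> \<nu>"
    proof (rule le_W2I[OF _ \<gamma>\<^sub>0 transport_cost_finite[OF X \<gamma>\<^sub>0 \<mu> \<nu>]])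
      fix \<gamma> assume "\<gamma> \<in> couplings \<mu> \<nu>"
      then have "ennreal L * ennreal (\<Delta> / L) \<le> ennreal L * mean_dist \<gamma>"
        using coupling_bound L by (simp add: ennreal_mult[symmetric] \<Delta>_def)
      then show "ennreal (\<Delta> / L) \<le> mean_dist \<gamma>"
        using L by (simp add: ennreal_mult_le_mult_iff)
    qed (use L in \<open>simp add: \<Delta>_def\<close>)
    then show ?thesis using L unfolding \<Delta>_def by (simp add: divide_le_eq mult.commute)
  qed
qed

section \<open>Bounded W2-Lipschitz families\<close>

definition bounded_W2_lipschitz ::
    "'a::euclidean_space set \<Rightarrow> 'b::metric_space set \<Rightarrow> ('a measure \<Rightarrow> 'b \<Rightarrow> real) \<Rightarrow> bool" where
  "bounded_W2_lipschitz X S \<Phi> \<longleftrightarrow> (\<exists>B L. (\<forall>\<mu>\<in>probs X. \<forall>s\<in>S. \<bar>\<Phi> \<mu> s\<bar> \<le> B) \<and>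
     (\<forall>\<mu>\<in>probs X. \<forall>\<nu>\<in>probs X. \<forall>s\<in>S. \<forall>t\<in>S.
        \<bar>\<Phi> \<mu> s - \<Phi> \<nu> t\<bar> \<le> L * (dist s t + W2 \<mu> \<nu>)))"

lemma bounded_W2_lipschitzI:
  assumes "\<And>\<mu> s. \<mu> \<in> probs X \<Longrightarrow> s \<in> S \<Longrightarrow> \<bar>\<Phi> \<mu> s\<bar> \<le> B"
    and "\<And>\<mu> \<nu> s t. \<mu> \<in> probs X \<Longrightarrow> \<nu> \<in> probs X \<Longrightarrow> s \<in> S \<Longrightarrow> t \<in> S \<Longrightarrow>
           \<bar>\<Phi> \<mu> s - \<Phi> \<nu> t\<bar> \<le> L * (dist s t + W2 \<mu> \<nu>)"
  shows "bounded_W2_lipschitz X S \<Phi>"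
  using assms unfolding bounded_W2_lipschitz_def by blast

lemma bounded_W2_lipschitzE:
  assumes "bounded_W2_lipschitz X S \<Phi>"
  obtains B L where "0 \<le> B" "0 \<le> L" "\<And>\<mu> s. \<mu> \<in> probs X \<Longrightarrow> s \<in> S \<Longrightarrow> \<bar>\<Phi> \<mu> s\<bar> \<le> B"
    "\<And>\<mu> \<nu> s t. \<mu> \<in> probs X \<Longrightarrow> \<nu> \<in> probs X \<Longrightarrow> s \<in> S \<Longrightarrow> t \<in> S \<Longrightarrow>
       \<bar>\<Phi> \<mu> s - \<Phi> \<nu> t\<bar> \<le> L * (dist s t + W2 \<mu> \<nu>)"
proof -
  obtain B L where B: "\<forall>\<mu>\<in>probs X. \<forall>s\<in>S. \<bar>\<Phi> \<mu> s\<bar> \<le> B"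
    and L: "\<forall>\<mu>\<in>probs X. \<forall>\<nu>\<in>probs X. \<forall>s\<in>S. \<forall>t\<in>S.
              \<bar>\<Phi> \<mu> s - \<Phi> \<nu> t\<bar> \<le> L * (dist s t + W2 \<mu> \<nu>)"
    using assms unfolding bounded_W2_lipschitz_def by blast
  show thesis
  proof (rule that[of "max B 0" "max L 0"])
    fix \<mu> \<nu> s t assume "\<mu> \<in> probs X" "\<nu> \<in> probs X" "s \<in> S" "t \<in> S"
    then have "\<bar>\<Phi> \<mu> s - \<Phi> \<nu> t\<bar> \<le> L * (dist s t + W2 \<mu> \<nu>)" using L by blast
    also have "\<dots> \<le> max L 0 * (dist s t + W2 \<mu> \<nu>)"
      by (intro mult_right_mono add_nonneg_nonneg W2_nonneg) auto
    finally show "\<bar>\<Phi> \<mu> s - \<Phi> \<nu> t\<bar> \<le> max L 0 * (dist s t + W2 \<mu> \<nu>)" .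
  qed (use B in \<open>auto intro: le_max_iff_disj[THEN iffD2]\<close>)
qed

lemma bounded_W2_lipschitz_cong:
  assumes "bounded_W2_lipschitz X S \<Phi>" "\<And>\<mu> s. \<mu> \<in> probs X \<Longrightarrow> s \<in> S \<Longrightarrow> \<Psi> \<mu> s = \<Phi> \<mu> s"
  shows "bounded_W2_lipschitz X S \<Psi>"
  using assms unfolding bounded_W2_lipschitz_def by simp

lemma bounded_W2_lipschitz_const: "bounded_W2_lipschitz X S (\<lambda>\<mu> s. c)"
  by (rule bounded_W2_lipschitzI[where B="\<bar>c\<bar>" and L=0]) auto

lemma bounded_W2_lipschitz_lipschitz_on:
  assumes "compact S" "L-lipschitz_on S f"
  shows "bounded_W2_lipschitz X S (\<lambda>\<mu> s. f s)"
proof -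
  have "bounded (f ` S)"
    using compact_imp_bounded[OF compact_continuous_image[OF _ assms(1)]]
      lipschitz_on_continuous_on[OF assms(2)]
    by blast
  then obtain B where "\<And>s. s \<in> S \<Longrightarrow> \<bar>f s\<bar> \<le> B"
    unfolding bounded_iff by auto
  moreover have "\<bar>f s - f t\<bar> \<le> L * (dist s t + W2 \<mu> \<nu>)" if "s \<in> S" "t \<in> S" for s t \<mu> \<nu>
  proof -
    have "\<bar>f s - f t\<bar> \<le> L * dist s t"
      using lipschitz_onD[OF assms(2) that] by (simp add: dist_real_def)
    also have "\<dots> \<le> L * (dist s t + W2 \<mu> \<nu>)"
      using lipschitz_on_nonneg[OF assms(2)] W2_nonneg by (intro mult_left_mono) auto
    finally show ?thesis .
  qed
  ultimately show ?thesis by (intro bounded_W2_lipschitzI)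
qed

lemma bounded_W2_lipschitz_add:
  assumes "bounded_W2_lipschitz X S \<Phi>" "bounded_W2_lipschitz X S \<Psi>"
  shows "bounded_W2_lipschitz X S (\<lambda>\<mu> s. \<Phi> \<mu> s + \<Psi> \<mu> s)"
proof -
  obtain B L where \<Phi>_bnd: "\<And>\<mu> s. \<mu> \<in> probs X \<Longrightarrow> s \<in> S \<Longrightarrow> \<bar>\<Phi> \<mu> s\<bar> \<le> B"
    and \<Phi>_lip: "\<And>\<mu> \<nu> s t. \<mu> \<in> probs X \<Longrightarrow> \<nu> \<in> probs X \<Longrightarrow> s \<in> S \<Longrightarrow> t \<in> S \<Longrightarrow>
       \<bar>\<Phi> \<mu> s - \<Phi> \<nu> t\<bar> \<le> L * (dist s t + W2 \<mu> \<nu>)"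
    using bounded_W2_lipschitzE[OF assms(1)] by metis
  obtain B' L' where \<Psi>_bnd: "\<And>\<mu> s. \<mu> \<in> probs X \<Longrightarrow> s \<in> S \<Longrightarrow> \<bar>\<Psi> \<mu> s\<bar> \<le> B'"
    and \<Psi>_lip: "\<And>\<mu> \<nu> s t. \<mu> \<in> probs X \<Longrightarrow> \<nu> \<in> probs X \<Longrightarrow> s \<in> S \<Longrightarrow> t \<in> S \<Longrightarrow>
       \<bar>\<Psi> \<mu> s - \<Psi> \<nu> t\<bar> \<le> L' * (dist s t + W2 \<mu> \<nu>)"
    using bounded_W2_lipschitzE[OF assms(2)] by metis
  show ?thesis
  proof (rule bounded_W2_lipschitzI[where B="B + B'" and L="L + L'"])
    fix \<mu> s assume "\<mu> \<in> probs X" "s \<in> S"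
    then show "\<bar>\<Phi> \<mu> s + \<Psi> \<mu> s\<bar> \<le> B + B'"
      using \<Phi>_bnd[of \<mu> s] \<Psi>_bnd[of \<mu> s] by linarith
  next
    fix \<mu> \<nu> s t assume "\<mu> \<in> probs X" "\<nu> \<in> probs X" "s \<in> S" "t \<in> S"
    then show "\<bar>\<Phi> \<mu> s + \<Psi> \<mu> s - (\<Phi> \<nu> t + \<Psi> \<nu> t)\<bar> \<le> (L + L') * (dist s t + W2 \<mu> \<nu>)"
      using \<Phi>_lip[of \<mu> \<nu> s t] \<Psi>_lip[of \<mu> \<nu> s t] by (simp add: distrib_right)
  qed
qed

lemma bounded_W2_lipschitz_cmult:
  assumes "bounded_W2_lipschitz X S \<Phi>"
  shows "bounded_W2_lipschitz X S (\<lambda>\<mu> s. c * \<Phi> \<mu> s)"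
proof -
  obtain B L where \<Phi>_bnd: "\<And>\<mu> s. \<mu> \<in> probs X \<Longrightarrow> s \<in> S \<Longrightarrow> \<bar>\<Phi> \<mu> s\<bar> \<le> B"
    and \<Phi>_lip: "\<And>\<mu> \<nu> s t. \<mu> \<in> probs X \<Longrightarrow> \<nu> \<in> probs X \<Longrightarrow> s \<in> S \<Longrightarrow> t \<in> S \<Longrightarrow>
       \<bar>\<Phi> \<mu> s - \<Phi> \<nu> t\<bar> \<le> L * (dist s t + W2 \<mu> \<nu>)"
    using bounded_W2_lipschitzE[OF assms] by metis
  show ?thesis
  proof (rule bounded_W2_lipschitzI[where B="\<bar>c\<bar> * B" and L="\<bar>c\<bar> * L"])
    fix \<mu> s assume "\<mu> \<in> probs X" "s \<in> S"
    then show "\<bar>c * \<Phi> \<mu> s\<bar> \<le> \<bar>c\<bar> * B"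
      using \<Phi>_bnd by (simp add: abs_mult mult_left_mono)
  next
    fix \<mu> \<nu> s t assume "\<mu> \<in> probs X" "\<nu> \<in> probs X" "s \<in> S" "t \<in> S"
    then have "\<bar>c\<bar> * \<bar>\<Phi> \<mu> s - \<Phi> \<nu> t\<bar> \<le> \<bar>c\<bar> * (L * (dist s t + W2 \<mu> \<nu>))"
      using \<Phi>_lip by (simp add: mult_left_mono)
    then show "\<bar>c * \<Phi> \<mu> s - c * \<Phi> \<nu> t\<bar> \<le> \<bar>c\<bar> * L * (dist s t + W2 \<mu> \<nu>)"
      by (simp add: abs_mult right_diff_distrib[symmetric] mult.assoc)
  qed
qed

lemma bounded_W2_lipschitz_diff:
  assumes "bounded_W2_lipschitz X S \<Phi>" "bounded_W2_lipschitz X S \<Psi>"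
  shows "bounded_W2_lipschitz X S (\<lambda>\<mu> s. \<Phi> \<mu> s - \<Psi> \<mu> s)"
  using bounded_W2_lipschitz_add[OF assms(1) bounded_W2_lipschitz_cmult[OF assms(2), of "-1"]]
  by simp

lemma bounded_W2_lipschitz_mult:
  assumes "bounded_W2_lipschitz X S \<Phi>" "bounded_W2_lipschitz X S \<Psi>"
  shows "bounded_W2_lipschitz X S (\<lambda>\<mu> s. \<Phi> \<mu> s * \<Psi> \<mu> s)"
proof -
  obtain B L where B: "0 \<le> B" and \<Phi>_bnd: "\<And>\<mu> s. \<mu> \<in> probs X \<Longrightarrow> s \<in> S \<Longrightarrow> \<bar>\<Phi> \<mu> s\<bar> \<le> B"
    and \<Phi>_lip: "\<And>\<mu> \<nu> s t. \<mu> \<in> probs X \<Longrightarrow> \<nu> \<in> probs X \<Longrightarrow> s \<in> S \<Longrightarrow> t \<in> S \<Longrightarrow>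
       \<bar>\<Phi> \<mu> s - \<Phi> \<nu> t\<bar> \<le> L * (dist s t + W2 \<mu> \<nu>)"
    using bounded_W2_lipschitzE[OF assms(1)] by metis
  obtain B' L' where B': "0 \<le> B'" and \<Psi>_bnd: "\<And>\<mu> s. \<mu> \<in> probs X \<Longrightarrow> s \<in> S \<Longrightarrow> \<bar>\<Psi> \<mu> s\<bar> \<le> B'"
    and \<Psi>_lip: "\<And>\<mu> \<nu> s t. \<mu> \<in> probs X \<Longrightarrow> \<nu> \<in> probs X \<Longrightarrow> s \<in> S \<Longrightarrow> t \<in> S \<Longrightarrow>
       \<bar>\<Psi> \<mu> s - \<Psi> \<nu> t\<bar> \<le> L' * (dist s t + W2 \<mu> \<nu>)"
    using bounded_W2_lipschitzE[OF assms(2)] by metis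
  show ?thesis
  proof (rule bounded_W2_lipschitzI[where B="B * B'" and L="B * L' + B' * L"])
    fix \<mu> s assume "\<mu> \<in> probs X" "s \<in> S"
    then show "\<bar>\<Phi> \<mu> s * \<Psi> \<mu> s\<bar> \<le> B * B'"
      unfolding abs_mult using \<Phi>_bnd[of \<mu> s] \<Psi>_bnd[of \<mu> s] by (intro mult_mono) auto
  next
    fix \<mu> \<nu> s t assume *: "\<mu> \<in> probs X" "\<nu> \<in> probs X" "s \<in> S" "t \<in> S"
    define D where "D = dist s t + W2 \<mu> \<nu>"
    have "\<Phi> \<mu> s * \<Psi> \<mu> s - \<Phi> \<nu> t * \<Psi> \<nu> t
          = \<Phi> \<mu> s * (\<Psi> \<mu> s - \<Psi> \<nu> t) + \<Psi> \<nu> t * (\<Phi> \<mu> s - \<Phi> \<nu> t)"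
      by (simp add: algebra_simps)
    also have "\<bar>\<dots>\<bar> \<le> \<bar>\<Phi> \<mu> s\<bar> * \<bar>\<Psi> \<mu> s - \<Psi> \<nu> t\<bar> + \<bar>\<Psi> \<nu> t\<bar> * \<bar>\<Phi> \<mu> s - \<Phi> \<nu> t\<bar>"
      by (metis abs_mult abs_triangle_ineq)
    also have "\<dots> \<le> B * (L' * D) + B' * (L * D)"
      using * B B' \<Phi>_bnd \<Psi>_bnd \<Phi>_lip[of \<mu> \<nu> s t] \<Psi>_lip[of \<mu> \<nu> s t]
      unfolding D_def by (intro add_mono mult_mono) auto
    finally show "\<bar>\<Phi> \<mu> s * \<Psi> \<mu> s - \<Phi> \<nu> t * \<Psi> \<nu> t\<bar> \<le> (B * L' + B' * L) * D"
      by (simp add: algebra_simps)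
  qed
qed

lemma bounded_W2_lipschitz_compose:
  assumes "bounded_W2_lipschitz X S \<Phi>" "C-lipschitz_on T g"
    and "\<And>\<mu> s. \<mu> \<in> probs X \<Longrightarrow> s \<in> S \<Longrightarrow> \<Phi> \<mu> s \<in> T"
  shows "bounded_W2_lipschitz X S (\<lambda>\<mu> s. g (\<Phi> \<mu> s))"
proof (cases "T = {}")
  case True
  then show ?thesis using assms(3) by (intro bounded_W2_lipschitzI[where B=0 and L=0]) auto
next
  case False
  then obtain t\<^sub>0 where t\<^sub>0: "t\<^sub>0 \<in> T" by blast
  obtain B L where \<Phi>_bnd: "\<And>\<mu> s. \<mu> \<in> probs X \<Longrightarrow> s \<in> S \<Longrightarrow> \<bar>\<Phi> \<mu> s\<bar> \<le> B"
    and \<Phi>_lip: "\<And>\<mu> \<nu> s t. \<mu> \<in> probs X \<Longrightarrow> \<nu> \<in> probs X \<Longrightarrow> s \<in> S \<Longrightarrow> t \<in> S \<Longrightarrow>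
       \<bar>\<Phi> \<mu> s - \<Phi> \<nu> t\<bar> \<le> L * (dist s t + W2 \<mu> \<nu>)"
    using bounded_W2_lipschitzE[OF assms(1)] by metis
  have g_lip: "\<bar>g a - g b\<bar> \<le> C * \<bar>a - b\<bar>" if "a \<in> T" "b \<in> T" for a b
    using lipschitz_onD[OF assms(2) that] by (simp add: dist_real_def)
  have C: "0 \<le> C" by (rule lipschitz_on_nonneg[OF assms(2)])
  show ?thesis
  proof (rule bounded_W2_lipschitzI[where B="\<bar>g t\<^sub>0\<bar> + C * (B + \<bar>t\<^sub>0\<bar>)" and L="C * L"])
    fix \<mu> s assume *: "\<mu> \<in> probs X" "s \<in> S"
    have "\<bar>g (\<Phi> \<mu> s) - g t\<^sub>0\<bar> \<le> C * \<bar>\<Phi> \<mu> s - t\<^sub>0\<bar>" using * t\<^sub>0 assms(3) by (intro g_lip)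
    also have "\<dots> \<le> C * (B + \<bar>t\<^sub>0\<bar>)" using * \<Phi>_bnd[of \<mu> s] C by (intro mult_left_mono) auto
    finally show "\<bar>g (\<Phi> \<mu> s)\<bar> \<le> \<bar>g t\<^sub>0\<bar> + C * (B + \<bar>t\<^sub>0\<bar>)" by linarith
  next
    fix \<mu> \<nu> s t assume *: "\<mu> \<in> probs X" "\<nu> \<in> probs X" "s \<in> S" "t \<in> S"
    have "\<bar>g (\<Phi> \<mu> s) - g (\<Phi> \<nu> t)\<bar> \<le> C * \<bar>\<Phi> \<mu> s - \<Phi> \<nu> t\<bar>" using * assms(3) by (intro g_lip)
    also have "\<dots> \<le> C * (L * (dist s t + W2 \<mu> \<nu>))" using * \<Phi>_lip C by (intro mult_left_mono) auto
    finally show "\<bar>g (\<Phi> \<mu> s) - g (\<Phi> \<nu> t)\<bar> \<le> C * L * (dist s t + W2 \<mu> \<nu>)"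
      by (simp add: mult.assoc)
  qed
qed

lemma lipschitz_on_ln:
  assumes "0 < k"
  shows "(1 / k)-lipschitz_on {k..} ln"
proof (rule lipschitz_onI)
  have *: "ln a - ln b \<le> \<bar>a - b\<bar> / k" if "k \<le> a" "k \<le> b" for a b
  proof -
    have "ln a - ln b = ln (a / b)" using that assms by (simp add: ln_div)
    also have "\<dots> \<le> a / b - 1" using that assms by (intro ln_le_minus_one) simp
    also have "\<dots> = (a - b) / b" using that assms by (simp add: field_simps)
    also have "\<dots> \<le> \<bar>a - b\<bar> / k" using that assms by (intro frac_le) auto
    finally show ?thesis .
  qed
  fix a b assume "a \<in> {k..}" "b \<in> {k..}"
  then show "dist (ln a) (ln b) \<le> 1 / k * dist a b"
    using *[of a b] *[of b a] by (simp add: dist_real_def abs_le_iff abs_minus_commute)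
qed (use assms in simp)

lemma lipschitz_on_inverse:
  assumes "0 < k"
  shows "(1 / k\<^sup>2)-lipschitz_on {k..} (\<lambda>x. 1 / x)"
proof (rule lipschitz_onI)
  fix a b assume "a \<in> {k..}" "b \<in> {k..}"
  then have ab: "k \<le> a" "k \<le> b" by auto
  have "dist (1 / a) (1 / b) = \<bar>a - b\<bar> / (a * b)"
    using ab assms by (simp add: dist_real_def field_simps abs_minus_commute abs_mult)
  also have "\<dots> \<le> \<bar>a - b\<bar> / k\<^sup>2"
    using ab assms by (intro divide_left_mono) (auto simp: power2_eq_square intro!: mult_mono)
  finally show "dist (1 / a) (1 / b) \<le> 1 / k\<^sup>2 * dist a b" by (simp add: dist_real_def)
qed simp

lemma bounded_W2_lipschitz_snd:
  assumes "bounded_W2_lipschitz X S \<Phi>"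
  shows "bounded_W2_lipschitz X (T \<times> S) (\<lambda>\<mu> p. \<Phi> \<mu> (snd p))"
proof -
  obtain B L where L: "0 \<le> L"
    and \<Phi>_bnd: "\<And>\<mu> s. \<mu> \<in> probs X \<Longrightarrow> s \<in> S \<Longrightarrow> \<bar>\<Phi> \<mu> s\<bar> \<le> B"
    and \<Phi>_lip: "\<And>\<mu> \<nu> s t. \<mu> \<in> probs X \<Longrightarrow> \<nu> \<in> probs X \<Longrightarrow> s \<in> S \<Longrightarrow> t \<in> S \<Longrightarrow>
       \<bar>\<Phi> \<mu> s - \<Phi> \<nu> t\<bar> \<le> L * (dist s t + W2 \<mu> \<nu>)"
    using bounded_W2_lipschitzE[OF assms] by metis
  show ?thesis
  proof (rule bounded_W2_lipschitzI[where B=B and L=L])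
    fix \<mu> \<nu> and p q :: "'c \<times> 'b"
    assume *: "\<mu> \<in> probs X" "\<nu> \<in> probs X" "p \<in> T \<times> S" "q \<in> T \<times> S"
    then have "\<bar>\<Phi> \<mu> (snd p) - \<Phi> \<nu> (snd q)\<bar> \<le> L * (dist (snd p) (snd q) + W2 \<mu> \<nu>)"
      by (intro \<Phi>_lip) auto
    also have "\<dots> \<le> L * (dist p q + W2 \<mu> \<nu>)"
      using L dist_snd_le[of p q] by (intro mult_left_mono) auto
    finally show "\<bar>\<Phi> \<mu> (snd p) - \<Phi> \<nu> (snd q)\<bar> \<le> L * (dist p q + W2 \<mu> \<nu>)" .
  qed (use \<Phi>_bnd in auto)
qed

lemma bounded_W2_lipschitz_set_integral:
  assumes X: "compact X" and H: "bounded_W2_lipschitz X (X \<times> X) H"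
  shows "bounded_W2_lipschitz X X (\<lambda>\<mu> x. LINT y:X|\<mu>. H \<mu> (x, y))"
proof -
  obtain B L where L: "0 \<le> L"
    and H_bnd: "\<And>\<mu> p. \<mu> \<in> probs X \<Longrightarrow> p \<in> X \<times> X \<Longrightarrow> \<bar>H \<mu> p\<bar> \<le> B"
    and H_lip: "\<And>\<mu> \<nu> p q. \<mu> \<in> probs X \<Longrightarrow> \<nu> \<in> probs X \<Longrightarrow> p \<in> X \<times> X \<Longrightarrow> q \<in> X \<times> X \<Longrightarrow>
       \<bar>H \<mu> p - H \<nu> q\<bar> \<le> L * (dist p q + W2 \<mu> \<nu>)"
    using bounded_W2_lipschitzE[OF H] by metis
  have slice: "L-lipschitz_on X (\<lambda>y. H \<mu> (x, y))" if "\<mu> \<in> probs X" "x \<in> X" for \<mu> x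
  proof (rule lipschitz_onI)
    fix y y' assume "y \<in> X" "y' \<in> X"
    then show "dist (H \<mu> (x, y)) (H \<mu> (x, y')) \<le> L * dist y y'"
      using H_lip[of \<mu> \<mu> "(x, y)" "(x, y')"] that W2_self[OF that(1)]
      by (simp add: dist_real_def dist_Pair_Pair)
  qed fact
  note slice_cont = lipschitz_on_continuous_on[OF slice]
  show ?thesis
  proof (rule bounded_W2_lipschitzI[where B=B and L="2 * L"])
    fix \<mu> x assume "\<mu> \<in> probs X" "x \<in> X"
    then show "\<bar>LINT y:X|\<mu>. H \<mu> (x, y)\<bar> \<le> B"
      using H_bnd by (intro abs_set_integral_probs_le[OF X _ slice_cont]) auto
  next
    fix \<mu> \<nu> x x' assume *: "\<mu> \<in> probs X" "\<nu> \<in> probs X" "x \<in> X" "x' \<in> X"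
    have "(LINT y:X|\<mu>. H \<mu> (x, y)) - (LINT y:X|\<nu>. H \<nu> (x', y))
        = (LINT y:X|\<mu>. H \<mu> (x, y) - H \<nu> (x', y))
          + ((LINT y:X|\<mu>. H \<nu> (x', y)) - (LINT y:X|\<nu>. H \<nu> (x', y)))"
      using * by (simp add: set_integral_diff(2) set_integrable_probs[OF X _ slice_cont])
    also have "\<bar>\<dots>\<bar> \<le> L * (dist x x' + W2 \<mu> \<nu>) + L * W2 \<mu> \<nu>"
    proof (rule abs_triangle_ineq[THEN order_trans], rule add_mono)
      have "\<bar>H \<mu> (x, y) - H \<nu> (x', y)\<bar> \<le> L * (dist x x' + W2 \<mu> \<nu>)" if "y \<in> X" for y
        using H_lip[of \<mu> \<nu> "(x, y)" "(x', y)"] * that by (simp add: dist_Pair_Pair)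
      then show "\<bar>LINT y:X|\<mu>. H \<mu> (x, y) - H \<nu> (x', y)\<bar> \<le> L * (dist x x' + W2 \<mu> \<nu>)"
        using * by (intro abs_set_integral_probs_le[OF X] continuous_on_diff slice_cont)
      show "\<bar>(LINT y:X|\<mu>. H \<nu> (x', y)) - (LINT y:X|\<nu>. H \<nu> (x', y))\<bar> \<le> L * W2 \<mu> \<nu>"
        using * by (intro abs_set_integral_diff_le_W2[OF X] slice)
    qed
    also have "\<dots> \<le> 2 * L * (dist x x' + W2 \<mu> \<nu>)"
      using L by (simp add: algebra_simps)
    finally show "\<bar>(LINT y:X|\<mu>. H \<mu> (x, y)) - (LINT y:X|\<nu>. H \<nu> (x', y))\<bar>
                    \<le> 2 * L * (dist x x' + W2 \<mu> \<nu>)" .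
  qed
qed

lemma bounded_W2_lipschitz_set_integral_lborel:
  assumes X: "compact X" and H: "bounded_W2_lipschitz X (X \<times> X) H"
  shows "bounded_W2_lipschitz X X (\<lambda>\<mu> x. LINT y:X|lborel. H \<mu> (x, y))"
proof -
  obtain B L where L: "0 \<le> L"
    and H_bnd: "\<And>\<mu> p. \<mu> \<in> probs X \<Longrightarrow> p \<in> X \<times> X \<Longrightarrow> \<bar>H \<mu> p\<bar> \<le> B"
    and H_lip: "\<And>\<mu> \<nu> p q. \<mu> \<in> probs X \<Longrightarrow> \<nu> \<in> probs X \<Longrightarrow> p \<in> X \<times> X \<Longrightarrow> q \<in> X \<times> X \<Longrightarrow>
       \<bar>H \<mu> p - H \<nu> q\<bar> \<le> L * (dist p q + W2 \<mu> \<nu>)"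
    using bounded_W2_lipschitzE[OF H] by metis
  have slice: "L-lipschitz_on X (\<lambda>y. H \<mu> (x, y))" if "\<mu> \<in> probs X" "x \<in> X" for \<mu> x
  proof (rule lipschitz_onI)
    fix y y' assume "y \<in> X" "y' \<in> X"
    then show "dist (H \<mu> (x, y)) (H \<mu> (x, y')) \<le> L * dist y y'"
      using H_lip[of \<mu> \<mu> "(x, y)" "(x, y')"] that W2_self[OF that(1)]
      by (simp add: dist_real_def dist_Pair_Pair)
  qed fact
  have integrable: "set_integrable lborel X (\<lambda>y. H \<mu> (x, y))" if "\<mu> \<in> probs X" "x \<in> X" for \<mu> x
    unfolding set_integrable_def
    by (rule borel_integrable_compact[OF X lipschitz_on_continuous_on[OF slice[OF that]]])
  have X_sets: "X \<in> sets lborel" "emeasure lborel X \<noteq> \<infinity>"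
    using borel_compact[OF X] emeasure_compact_finite[OF X] by auto
  show ?thesis
  proof (rule bounded_W2_lipschitzI[where B="B * measure lborel X" and L="L * measure lborel X"])
    fix \<mu> x assume "\<mu> \<in> probs X" "x \<in> X"
    then show "\<bar>LINT y:X|lborel. H \<mu> (x, y)\<bar> \<le> B * measure lborel X"
      using H_bnd by (intro abs_set_integral_le_measure[OF integrable X_sets]) auto
  next
    fix \<mu> \<nu> x x' assume *: "\<mu> \<in> probs X" "\<nu> \<in> probs X" "x \<in> X" "x' \<in> X"
    have "\<bar>H \<mu> (x, y) - H \<nu> (x', y)\<bar> \<le> L * (dist x x' + W2 \<mu> \<nu>)" if "y \<in> X" for y
      using H_lip[of \<mu> \<nu> "(x, y)" "(x', y)"] * that by (simp add: dist_Pair_Pair)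
    then have "\<bar>LINT y:X|lborel. H \<mu> (x, y) - H \<nu> (x', y)\<bar>
                 \<le> L * (dist x x' + W2 \<mu> \<nu>) * measure lborel X"
      using * by (intro abs_set_integral_le_measure[OF _ X_sets] set_integral_diff(1) integrable)
    then show "\<bar>(LINT y:X|lborel. H \<mu> (x, y)) - (LINT y:X|lborel. H \<nu> (x', y))\<bar>
                 \<le> L * measure lborel X * (dist x x' + W2 \<mu> \<nu>)"
      using * by (simp add: set_integral_diff(2) integrable mult_ac)
  qed
qed

lemma bounded_W2_lipschitz_bounds:
  fixes a :: "'a::euclidean_space measure \<Rightarrow> 'a \<Rightarrow> real"
  assumes "bounded_W2_lipschitz X X a" "P \<subseteq> probs X"
  shows "\<exists>M L. M > 0 \<and> L > 0 \<and> (\<forall>m\<in>P. \<forall>x\<in>X. \<bar>a m x\<bar> \<le> M) \<and>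
           (\<forall>m\<in>P. \<forall>m'\<in>P. \<forall>x\<in>X. \<forall>y\<in>X.
              \<bar>a m x - a m' y\<bar> \<le> L * (norm (x - y) + W2 m m'))"
    (is "\<exists>M L. ?bounds M L")
proof -
  obtain B L where B: "0 \<le> B" and L: "0 \<le> L"
    and bnd: "\<And>m x. m \<in> probs X \<Longrightarrow> x \<in> X \<Longrightarrow> \<bar>a m x\<bar> \<le> B"
    and lip: "\<And>m m' x y. m \<in> probs X \<Longrightarrow> m' \<in> probs X \<Longrightarrow> x \<in> X \<Longrightarrow> y \<in> X \<Longrightarrow>
       \<bar>a m x - a m' y\<bar> \<le> L * (dist x y + W2 m m')"
    using bounded_W2_lipschitzE[OF assms(1)] by metis
  have "\<bar>a m x - a m' y\<bar> \<le> (L + 1) * (norm (x - y) + W2 m m')"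
    if "m \<in> probs X" "m' \<in> probs X" "x \<in> X" "y \<in> X" for m m' x y
  proof -
    have "L * (dist x y + W2 m m') \<le> (L + 1) * (dist x y + W2 m m')"
      by (intro mult_right_mono add_nonneg_nonneg W2_nonneg) auto
    then show ?thesis using lip[OF that] by (simp add: dist_norm)
  qed
  moreover have "\<bar>a m x\<bar> \<le> B + 1" if "m \<in> probs X" "x \<in> X" for m x
    using bnd[OF that] by simp
  ultimately have "?bounds (B + 1) (L + 1)" using B L assms(2) by (auto simp: subset_iff)
  then show ?thesis by blast
qed

section \<open>Self-convolutions of Lipschitz kernels\<close>

definition lipschitz_kernel :: "('a::euclidean_space \<Rightarrow> real) \<Rightarrow> bool" where
  "lipschitz_kernel g \<longleftrightarrow> (\<forall>x. 0 \<le> g x) \<and> (\<exists>L. L-lipschitz_on UNIV g) \<and> integrable lborel g \<and>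
     integrable lborel (\<lambda>x. norm x * g x) \<and> closure {x. 0 < g x} = UNIV"

lemma integrable_lborel_scaleR_arg:
  fixes h :: "'a::euclidean_space \<Rightarrow> real"
  assumes "integrable lborel h" "c \<noteq> 0"
  shows "integrable lborel (\<lambda>x. h (c *\<^sub>R x))"
proof -
  have h: "h \<in> borel_measurable borel" using borel_measurable_integrable[OF assms(1)] by simp
  have "integrable (density (distr lborel borel (\<lambda>x. 0 + c *\<^sub>R x))
                      (\<lambda>_. ennreal (\<bar>c\<bar> ^ DIM('a)))) h"
    using assms(1) by (subst (asm) lborel_affine[OF assms(2), where t=0])
  then have "integrable lborel (\<lambda>x. \<bar>c\<bar> ^ DIM('a) * h (c *\<^sub>R x))"
    using h by (simp add: integrable_density integrable_distr_eq)
  then show ?thesis using assms(2) by simp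
qed

lemma integral_lborel_pos:
  fixes F :: "'a::euclidean_space \<Rightarrow> real"
  assumes "continuous_on UNIV F" "\<And>w. 0 \<le> F w" "integrable lborel F" "0 < F w\<^sub>0"
  shows "0 < (\<integral>w. F w \<partial>lborel)"
proof -
  have "open {w. F w\<^sub>0 / 2 < F w}" by (intro open_Collect_less continuous_intros assms(1))
  moreover have "w\<^sub>0 \<in> {w. F w\<^sub>0 / 2 < F w}" using assms(4) by simp
  ultimately obtain r where r: "0 < r" "ball w\<^sub>0 r \<subseteq> {w. F w\<^sub>0 / 2 < F w}" by (meson openE)
  have "0 < measure lborel (ball w\<^sub>0 r) * (F w\<^sub>0 / 2)"
    using content_ball_pos[OF r(1)] assms(4) by simp
  also have "\<dots> = (\<integral>w. indicator (ball w\<^sub>0 r) w * (F w\<^sub>0 / 2) \<partial>lborel)" by simp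
  also have "\<dots> \<le> (\<integral>w. F w \<partial>lborel)"
  proof (rule integral_mono[OF _ assms(3)])
    show "integrable lborel (\<lambda>w. indicator (ball w\<^sub>0 r) w * (F w\<^sub>0 / 2))"
      using emeasure_lborel_ball_finite[of w\<^sub>0 r] by (intro integrable_mult_left) auto
    show "indicator (ball w\<^sub>0 r) w * (F w\<^sub>0 / 2) \<le> F w" for w
      using r(2) assms(2) by (cases "w \<in> ball w\<^sub>0 r") auto
  qed
  finally show ?thesis .
qed

lemma lipschitz_kernel_cmult:
  assumes "lipschitz_kernel g" "0 < c"
  shows "lipschitz_kernel (\<lambda>x. c * g x)"
proof -
  obtain L where "L-lipschitz_on UNIV g" using assms(1) unfolding lipschitz_kernel_def by blast
  then have "(c * L)-lipschitz_on UNIV (\<lambda>x. c * g x)"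
    using assms(2) by (intro lipschitz_on_cmult_real_nonneg) auto
  moreover have "{x. 0 < c * g x} = {x. 0 < g x}" using assms(2) by (simp add: zero_less_mult_iff)
  ultimately show ?thesis
    using assms unfolding lipschitz_kernel_def by (auto simp: mult.left_commute[of "norm _"])
qed

lemma lipschitz_kernel_scaleR_arg:
  assumes "lipschitz_kernel g" "c \<noteq> 0"
  shows "lipschitz_kernel (\<lambda>x. g (c *\<^sub>R x))"
proof -
  obtain L where L: "L-lipschitz_on UNIV g" and g: "integrable lborel g"
    and g_moment: "integrable lborel (\<lambda>x. norm x * g x)"
    and g_supp: "closure {x. 0 < g x} = UNIV"
    using assms(1) unfolding lipschitz_kernel_def by blast
  have "(L * \<bar>c\<bar>)-lipschitz_on UNIV (\<lambda>x. g (c *\<^sub>R x))"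
  proof (rule lipschitz_onI)
    fix x y :: 'a
    have "dist (g (c *\<^sub>R x)) (g (c *\<^sub>R y)) \<le> L * dist (c *\<^sub>R x) (c *\<^sub>R y)"
      by (rule lipschitz_onD[OF L]) auto
    then show "dist (g (c *\<^sub>R x)) (g (c *\<^sub>R y)) \<le> L * \<bar>c\<bar> * dist x y"
      by (simp add: dist_norm scaleR_diff_right[symmetric] mult.assoc)
  qed (use lipschitz_on_nonneg[OF L] in simp)
  moreover have "integrable lborel (\<lambda>x. norm x * g (c *\<^sub>R x))"
    using integrable_lborel_scaleR_arg[OF g_moment assms(2)] assms(2) by (simp add: mult.assoc)
  moreover have "closure {x. 0 < g (c *\<^sub>R x)} = UNIV"
  proof -
    have "{x. 0 < g (c *\<^sub>R x)} = scaleR (inverse c) ` {y. 0 < g y}"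
      using assms(2) by (auto simp: image_iff intro!: exI[of _ "c *\<^sub>R _"])
    then have "closure {x. 0 < g (c *\<^sub>R x)} = scaleR (inverse c) ` UNIV"
      by (simp add: closure_scaleR[symmetric] g_supp)
    also have "\<dots> = UNIV" using assms(2) by (auto simp: image_iff intro!: exI[of _ "c *\<^sub>R _"])
    finally show ?thesis .
  qed
  ultimately show ?thesis
    using assms(1) integrable_lborel_scaleR_arg[OF g assms(2)]
    unfolding lipschitz_kernel_def by blast
qed

lemma lipschitz_kernelI_second_moment:
  fixes g :: "'a::euclidean_space \<Rightarrow> real"
  assumes g_nonneg: "\<And>x. 0 \<le> g x" and L: "L-lipschitz_on UNIV g" and g: "integrable lborel g"
    and g_moment: "integrable lborel (\<lambda>x. (norm x)\<^sup>2 * g x)"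
    and g_supp: "closure {x. 0 < g x} = UNIV"
  shows "lipschitz_kernel g"
proof -
  have "integrable lborel (\<lambda>x. norm x * g x)"
  proof (rule Bochner_Integration.integrable_bound)
    show "integrable lborel (\<lambda>x. g x + (norm x)\<^sup>2 * g x)" using g g_moment by simp
    have "continuous_on UNIV (\<lambda>x. norm x * g x)"
      by (intro continuous_intros lipschitz_on_continuous_on[OF L])
    then show "(\<lambda>x. norm x * g x) \<in> borel_measurable lborel"
      by (simp add: borel_measurable_continuous_onI)
    show "AE x in lborel. norm (norm x * g x) \<le> norm (g x + (norm x)\<^sup>2 * g x)"
    proof (rule AE_I2)
      fix x :: 'a
      have "0 \<le> (norm x - 1)\<^sup>2" by simp
      then have "2 * norm x \<le> 1 + (norm x)\<^sup>2" by (simp add: power2_diff)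
      then have "norm x \<le> 1 + (norm x)\<^sup>2" using norm_ge_zero[of x] by linarith
      then have "norm x * g x \<le> (1 + (norm x)\<^sup>2) * g x" using g_nonneg by (rule mult_right_mono)
      then show "norm (norm x * g x) \<le> norm (g x + (norm x)\<^sup>2 * g x)"
        using g_nonneg[of x] by (simp add: algebra_simps)
    qed
  qed
  with assms show ?thesis unfolding lipschitz_kernel_def by blast
qed

lemma lipschitz_kernel_conv_integrable:
  assumes "lipschitz_kernel g"
  shows "integrable lborel (\<lambda>w. g (z - w) * g w)"
proof -
  obtain L where L: "L-lipschitz_on UNIV g" and g_nonneg: "\<And>x. 0 \<le> g x"
    and g: "integrable lborel g" and g_moment: "integrable lborel (\<lambda>x. norm x * g x)"
    using assms unfolding lipschitz_kernel_def by blast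
  have g_cont: "continuous_on UNIV g" by (rule lipschitz_on_continuous_on[OF L])
  show ?thesis
  proof (rule Bochner_Integration.integrable_bound)
    show "integrable lborel (\<lambda>w. (g 0 + L * norm z) * g w + L * (norm w * g w))"
      using g g_moment by simp
    have "continuous_on UNIV (\<lambda>w. g (z - w) * g w)"
      by (intro continuous_intros continuous_on_compose2[OF g_cont]) auto
    then show "(\<lambda>w. g (z - w) * g w) \<in> borel_measurable lborel"
      by (simp add: borel_measurable_continuous_onI)
    show "AE w in lborel.
            norm (g (z - w) * g w) \<le> norm ((g 0 + L * norm z) * g w + L * (norm w * g w))"
    proof (rule AE_I2)
      fix w
      have "g (z - w) \<le> g 0 + L * norm (z - w)"
        using lipschitz_onD[OF L, of "z - w" 0] by (simp add: dist_real_def)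
      also have "\<dots> \<le> g 0 + L * (norm z + norm w)"
        using lipschitz_on_nonneg[OF L] by (intro add_left_mono mult_left_mono norm_triangle_ineq4)
      finally have "g (z - w) * g w \<le> (g 0 + L * norm z + L * norm w) * g w"
        using g_nonneg by (intro mult_right_mono) (auto simp: algebra_simps)
      then show "norm (g (z - w) * g w) \<le> norm ((g 0 + L * norm z) * g w + L * (norm w * g w))"
        using g_nonneg[of w] g_nonneg[of "z - w"] by (simp add: algebra_simps)
    qed
  qed
qed

lemma lipschitz_kernel_conv_lipschitz:
  assumes "lipschitz_kernel g"
  shows "\<exists>L. L-lipschitz_on UNIV (\<lambda>z. \<integral>w. g (z - w) * g w \<partial>lborel)"
proof -
  obtain L where L: "L-lipschitz_on UNIV g" and g_nonneg: "\<And>x. 0 \<le> g x"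
    and g: "integrable lborel g"
    using assms unfolding lipschitz_kernel_def by blast
  have "(L * (\<integral>w. g w \<partial>lborel))-lipschitz_on UNIV (\<lambda>z. \<integral>w. g (z - w) * g w \<partial>lborel)"
  proof (rule lipschitz_onI)
    fix z z' :: 'a
    have "dist (\<integral>w. g (z - w) * g w \<partial>lborel) (\<integral>w. g (z' - w) * g w \<partial>lborel)
        = \<bar>\<integral>w. (g (z - w) - g (z' - w)) * g w \<partial>lborel\<bar>"
      using lipschitz_kernel_conv_integrable[OF assms]
      by (simp add: dist_real_def left_diff_distrib)
    also have "\<dots> \<le> (\<integral>w. \<bar>(g (z - w) - g (z' - w)) * g w\<bar> \<partial>lborel)"
      by (rule integral_abs_bound)
    also have "\<dots> \<le> (\<integral>w. L * dist z z' * g w \<partial>lborel)"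
    proof (rule integral_mono)
      show "integrable lborel (\<lambda>w. \<bar>(g (z - w) - g (z' - w)) * g w\<bar>)"
        using lipschitz_kernel_conv_integrable[OF assms] by (simp add: left_diff_distrib)
      fix w
      have "\<bar>g (z - w) - g (z' - w)\<bar> \<le> L * dist z z'"
        using lipschitz_onD[OF L, of "z - w" "z' - w"] by (simp add: dist_real_def dist_norm)
      then show "\<bar>(g (z - w) - g (z' - w)) * g w\<bar> \<le> L * dist z z' * g w"
        using g_nonneg[of w] by (simp add: abs_mult mult_right_mono)
    qed (use g in simp)
    finally show "dist (\<integral>w. g (z - w) * g w \<partial>lborel) (\<integral>w. g (z' - w) * g w \<partial>lborel)
                    \<le> L * (\<integral>w. g w \<partial>lborel) * dist z z'"
      by (simp add: mult_ac)
  qed (use lipschitz_on_nonneg[OF L] g_nonneg in \<open>simp add: integral_nonneg_AE\<close>)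
  then show ?thesis ..
qed

lemma lipschitz_kernel_conv_pos:
  assumes "lipschitz_kernel g"
  shows "0 < (\<integral>w. g (z - w) * g w \<partial>lborel)"
proof -
  obtain L where L: "L-lipschitz_on UNIV g" and g_nonneg: "\<And>x. 0 \<le> g x"
    and g_supp: "closure {x. 0 < g x} = UNIV"
    using assms unfolding lipschitz_kernel_def by blast
  have g_cont: "continuous_on UNIV g" by (rule lipschitz_on_continuous_on[OF L])
  \<comment> \<open>The open set where \<open>g (z - w) > 0\<close> is nonempty, so it meets the dense set where
    \<open>g w > 0\<close>.\<close>
  have "open {w. 0 < g (z - w)}"
    by (intro open_Collect_less continuous_intros continuous_on_compose2[OF g_cont]) auto
  moreover obtain u where "0 < g u"
    using g_supp by (metis closure_empty empty_Collect_eq empty_not_UNIV)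
  then have "{w. 0 < g (z - w)} \<inter> closure {x. 0 < g x} \<noteq> {}"
    using g_supp by (auto intro!: exI[of _ "z - u"])
  ultimately obtain w\<^sub>0 where "0 < g (z - w\<^sub>0)" "0 < g w\<^sub>0"
    using open_Int_closure_eq_empty by blast
  then show ?thesis
    using g_nonneg lipschitz_kernel_conv_integrable[OF assms]
    by (intro integral_lborel_pos[where w\<^sub>0=w\<^sub>0]
        continuous_intros continuous_on_compose2[OF g_cont]) auto
qed

lemma xi_eps_eq_cmult:
  assumes "\<And>x. 0 \<le> \<xi> x" "0 < \<epsilon>"
  obtains c where "0 \<le> c" "xi_eps \<xi> X \<epsilon> = (\<lambda>z. c * \<xi> ((1 / \<epsilon>) *\<^sub>R z))"
proof -
  define C where "C = (LINT x:X|lborel. \<xi> ((1 / \<epsilon>) *\<^sub>R x) / \<epsilon> ^ DIM('a))"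
  have "0 \<le> C"
    unfolding C_def set_lebesgue_integral_def using assms by (intro integral_nonneg_AE AE_I2) auto
  then have "0 \<le> 1 / (C * \<epsilon> ^ DIM('a))" using assms(2) by simp
  moreover have "xi_eps \<xi> X \<epsilon> = (\<lambda>z. 1 / (C * \<epsilon> ^ DIM('a)) * \<xi> ((1 / \<epsilon>) *\<^sub>R z))"
    unfolding xi_eps_def Let_def C_def[symmetric] by simp
  ultimately show thesis by (rule that)
qed

text \<open>The normalising constant \<open>C\<^sub>\<epsilon>\<^sub>,\<^sub>d\<close> vanishes when \<open>\<xi>\<close> vanishes almost everywhere on
  \<open>(1 / \<epsilon>) X\<close>; division by zero then makes \<open>\<xi>\<^sub>\<epsilon>\<close>, and hence \<open>K\<^sub>\<epsilon>\<close>, identically zero.\<close>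

lemma K_eps_cases:
  assumes "lipschitz_kernel \<xi>" "0 < \<epsilon>"
  shows "(\<forall>z. K_eps \<xi> X \<epsilon> z = 0) \<or>
         ((\<forall>z. 0 < K_eps \<xi> X \<epsilon> z) \<and> (\<exists>L. L-lipschitz_on UNIV (K_eps \<xi> X \<epsilon>)))"
proof -
  obtain c where c: "0 \<le> c" and xi: "xi_eps \<xi> X \<epsilon> = (\<lambda>z. c * \<xi> ((1 / \<epsilon>) *\<^sub>R z))"
    using xi_eps_eq_cmult[of \<xi> \<epsilon>] assms unfolding lipschitz_kernel_def by blast
  have K: "K_eps \<xi> X \<epsilon> = (\<lambda>z. \<integral>w. xi_eps \<xi> X \<epsilon> (z - w) * xi_eps \<xi> X \<epsilon> w \<partial>lborel)"
    by (simp add: fun_eq_iff K_eps_def)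
  show ?thesis
  proof (cases "c = 0")
    case True
    then show ?thesis unfolding K xi by simp
  next
    case False
    then have "lipschitz_kernel (xi_eps \<xi> X \<epsilon>)"
      unfolding xi using c assms
      by (intro lipschitz_kernel_cmult[OF lipschitz_kernel_scaleR_arg[OF assms(1)]]) auto
    then show ?thesis
      unfolding K using lipschitz_kernel_conv_pos lipschitz_kernel_conv_lipschitz by blast
  qed
qed

section \<open>The four drifts\<close>

lemma compact_pos_lower_bound:
  fixes f :: "'a::metric_space \<Rightarrow> real"
  assumes "compact S" "continuous_on S f" "\<And>s. s \<in> S \<Longrightarrow> 0 < f s"
  obtains k where "0 < k" "\<And>s. s \<in> S \<Longrightarrow> k \<le> f s"
proof (cases "S = {}")
  case False
  then obtain s\<^sub>0 where "s\<^sub>0 \<in> S" "\<And>s. s \<in> S \<Longrightarrow> f s\<^sub>0 \<le> f s"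
    using continuous_attains_inf[OF assms(1) False assms(2)] by blast
  then show thesis using assms(3) by (intro that[of "f s\<^sub>0"]) auto
qed (use that[of 1] in auto)

locale drift_setting =
  fixes X :: "'a::euclidean_space set" and K \<pi> :: "'a \<Rightarrow> real"
    and dF :: "'a measure \<Rightarrow> 'a \<Rightarrow> real"
  assumes compact_X: "compact X"
    and K_pos: "\<And>z. 0 < K z" and K_lipschitz: "\<exists>L. L-lipschitz_on UNIV K"
    and pi_pos: "\<And>x. x \<in> X \<Longrightarrow> 0 < \<pi> x" and pi_lipschitz: "\<exists>L. L-lipschitz_on X \<pi>"
    and pi_integral: "(LINT x:X|lborel. \<pi> x) = 1"
    and dF_bounded_W2_lipschitz: "bounded_W2_lipschitz X X dF"
begin

lemma continuous_on_K_shift: "continuous_on S (\<lambda>y. K (x - y))"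
proof -
  obtain L where "L-lipschitz_on UNIV K" using K_lipschitz by blast
  then show ?thesis
    by (rule continuous_on_compose2[OF lipschitz_on_continuous_on]) (auto intro: continuous_intros)
qed

lemma continuous_on_pi: "continuous_on X \<pi>"
  using pi_lipschitz lipschitz_on_continuous_on by blast

lemma lipschitz_on_K_diff: "\<exists>L. L-lipschitz_on (X \<times> X) (\<lambda>p. K (fst p - snd p))"
proof -
  obtain L where L: "L-lipschitz_on UNIV K" using K_lipschitz by blast
  have "(2 * L)-lipschitz_on (X \<times> X) (\<lambda>p. K (fst p - snd p))"
  proof (rule lipschitz_onI)
    fix p q :: "'a \<times> 'a"
    have "dist (K (fst p - snd p)) (K (fst q - snd q))
          \<le> L * dist (fst p - snd p) (fst q - snd q)"
      by (rule lipschitz_onD[OF L]) auto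
    also have "dist (fst p - snd p) (fst q - snd q) \<le> dist (fst p) (fst q) + dist (snd p) (snd q)"
      unfolding dist_norm by (rule order_trans[OF _ norm_triangle_ineq4]) (simp add: algebra_simps)
    also have "\<dots> \<le> 2 * dist p q" using dist_fst_le[of p q] dist_snd_le[of p q] by simp
    finally show "dist (K (fst p - snd p)) (K (fst q - snd q)) \<le> 2 * L * dist p q"
      using lipschitz_on_nonneg[OF L] by (simp add: mult_left_mono mult.assoc)
  qed (use lipschitz_on_nonneg[OF L] in simp)
  then show ?thesis ..
qed

lemma bounded_W2_lipschitz_K_diff:
  "bounded_W2_lipschitz X (X \<times> X) (\<lambda>\<mu> p. K (fst p - snd p))"
  using lipschitz_on_K_diff compact_Times[OF compact_X compact_X]
  by (auto intro: bounded_W2_lipschitz_lipschitz_on)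

lemma K_diff_lower_bound:
  obtains k where "0 < k" "\<And>x y. x \<in> X \<Longrightarrow> y \<in> X \<Longrightarrow> k \<le> K (x - y)"
proof -
  obtain L where "L-lipschitz_on (X \<times> X) (\<lambda>p. K (fst p - snd p))"
    using lipschitz_on_K_diff by blast
  from compact_pos_lower_bound[OF compact_Times[OF compact_X compact_X]
      lipschitz_on_continuous_on[OF this]]
  obtain k where "0 < k" "\<And>p. p \<in> X \<times> X \<Longrightarrow> k \<le> K (fst p - snd p)" using K_pos by blast
  then show thesis by (intro that[of k]) auto
qed

lemma bounded_W2_lipschitz_pi: "bounded_W2_lipschitz X X (\<lambda>\<mu> x. \<pi> x)"
  using pi_lipschitz compact_X by (auto intro: bounded_W2_lipschitz_lipschitz_on)

lemma pi_lower_bound: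
  obtains k where "0 < k" "\<And>x. x \<in> X \<Longrightarrow> k \<le> \<pi> x"
  using compact_pos_lower_bound[OF compact_X continuous_on_pi pi_pos] by blast

lemma bounded_W2_lipschitz_conv_meas: "bounded_W2_lipschitz X X (conv_meas K X)"
  using bounded_W2_lipschitz_set_integral[OF compact_X bounded_W2_lipschitz_K_diff]
  by (simp add: conv_meas_def[abs_def])

lemma conv_meas_lower_bound:
  obtains k where "0 < k" "\<And>\<mu> x. \<mu> \<in> probs X \<Longrightarrow> x \<in> X \<Longrightarrow> k \<le> conv_meas K X \<mu> x"
proof -
  obtain k where k: "0 < k" "\<And>x y. x \<in> X \<Longrightarrow> y \<in> X \<Longrightarrow> k \<le> K (x - y)"
    using K_diff_lower_bound by blast
  show thesis
  proof (rule that[OF k(1)])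
    fix \<mu> x assume "\<mu> \<in> probs X" "x \<in> X"
    then show "k \<le> conv_meas K X \<mu> x"
      unfolding conv_meas_def using k(2)
      by (intro set_integral_probs_ge[OF compact_X _ continuous_on_K_shift])
  qed
qed

lemma bounded_W2_lipschitz_log_ratio:
  assumes "bounded_W2_lipschitz X X (\<lambda>\<mu> x. q x)" "0 < k" "\<And>x. x \<in> X \<Longrightarrow> k \<le> q x"
  shows "bounded_W2_lipschitz X X (\<lambda>\<mu> x. ln (conv_meas K X \<mu> x / q x))"
proof -
  obtain k' where k': "0 < k'" "\<And>\<mu> x. \<mu> \<in> probs X \<Longrightarrow> x \<in> X \<Longrightarrow> k' \<le> conv_meas K X \<mu> x"
    using conv_meas_lower_bound by blast
  have "bounded_W2_lipschitz X X (\<lambda>\<mu> x. ln (conv_meas K X \<mu> x) - ln (q x))"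
    using k' assms
    by (intro bounded_W2_lipschitz_diff
        bounded_W2_lipschitz_compose[OF bounded_W2_lipschitz_conv_meas lipschitz_on_ln[OF k'(1)]]
        bounded_W2_lipschitz_compose[OF assms(1) lipschitz_on_ln[OF assms(2)]]) auto
  then show ?thesis
    by (rule bounded_W2_lipschitz_cong) (use k' assms in \<open>simp add: ln_divide_pos less_le_trans\<close>)
qed

lemma bounded_W2_lipschitz_KL:
  assumes "bounded_W2_lipschitz X X (\<lambda>\<mu> x. q x)" "0 < k" "\<And>x. x \<in> X \<Longrightarrow> k \<le> q x"
  shows "bounded_W2_lipschitz X X (\<lambda>\<mu> x. KL X (conv_meas K X \<mu>) q)"
  using bounded_W2_lipschitz_set_integral_lborel[OF compact_X bounded_W2_lipschitz_snd
      [OF bounded_W2_lipschitz_mult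
        [OF bounded_W2_lipschitz_conv_meas bounded_W2_lipschitz_log_ratio[OF assms]]]]
  by (simp add: KL_def)

lemma bounded_W2_lipschitz_conv_fun_pi: "bounded_W2_lipschitz X X (\<lambda>\<mu> x. conv_fun K X \<pi> x)"
  using bounded_W2_lipschitz_set_integral_lborel[OF compact_X bounded_W2_lipschitz_mult
      [OF bounded_W2_lipschitz_K_diff bounded_W2_lipschitz_snd[OF bounded_W2_lipschitz_pi]]]
  by (simp add: conv_fun_def)

lemma conv_fun_pi_lower_bound:
  obtains k where "0 < k" "\<And>x. x \<in> X \<Longrightarrow> k \<le> conv_fun K X \<pi> x"
proof -
  obtain k where k: "0 < k" "\<And>x y. x \<in> X \<Longrightarrow> y \<in> X \<Longrightarrow> k \<le> K (x - y)"
    using K_diff_lower_bound by blast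
  have "k \<le> conv_fun K X \<pi> x" if x: "x \<in> X" for x
  proof -
    have "k = (LINT y:X|lborel. k * \<pi> y)" using pi_integral by simp
    also have "\<dots> \<le> (LINT y:X|lborel. K (x - y) * \<pi> y)"
    proof (rule set_integral_mono)
      show "set_integrable lborel X (\<lambda>y. k * \<pi> y)"
        and "set_integrable lborel X (\<lambda>y. K (x - y) * \<pi> y)"
        unfolding set_integrable_def using continuous_on_K_shift continuous_on_pi
        by (intro borel_integrable_compact[OF compact_X] continuous_on_mult; simp)+
      show "k * \<pi> y \<le> K (x - y) * \<pi> y" if "y \<in> X" for y
        using k(2)[OF x that] pi_pos[OF that] by (simp add: mult_right_mono)
    qed
    finally show ?thesis unfolding conv_fun_def .
  qed
  with k(1) show thesis by (rule that)
qed

lemma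
  shows bounded_W2_lipschitz_log_ratio_pi:
      "bounded_W2_lipschitz X X (\<lambda>\<mu> x. ln (conv_meas K X \<mu> x / \<pi> x))"
    and bounded_W2_lipschitz_KL_pi: "bounded_W2_lipschitz X X (\<lambda>\<mu> x. KL X (conv_meas K X \<mu>) \<pi>)"
proof -
  obtain k where k: "0 < k" "\<And>x. x \<in> X \<Longrightarrow> k \<le> \<pi> x" using pi_lower_bound by blast
  show "bounded_W2_lipschitz X X (\<lambda>\<mu> x. ln (conv_meas K X \<mu> x / \<pi> x))"
    by (rule bounded_W2_lipschitz_log_ratio[OF bounded_W2_lipschitz_pi k])
  show "bounded_W2_lipschitz X X (\<lambda>\<mu> x. KL X (conv_meas K X \<mu>) \<pi>)"
    by (rule bounded_W2_lipschitz_KL[OF bounded_W2_lipschitz_pi k])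
qed

lemma bounded_W2_lipschitz_a1: "bounded_W2_lipschitz X X (a1 X dF \<sigma> K \<pi>)"
  unfolding a1_def[abs_def]
  by (intro bounded_W2_lipschitz_diff bounded_W2_lipschitz_add bounded_W2_lipschitz_cmult
      dF_bounded_W2_lipschitz bounded_W2_lipschitz_log_ratio_pi bounded_W2_lipschitz_KL_pi)

lemma bounded_W2_lipschitz_a2: "bounded_W2_lipschitz X X (a2 X dF \<sigma> K \<pi>)"
proof -
  obtain k where "0 < k" "\<And>x. x \<in> X \<Longrightarrow> k \<le> conv_fun K X \<pi> x"
    using conv_fun_pi_lower_bound by blast
  then show ?thesis
    unfolding a2_def[abs_def]
    by (intro bounded_W2_lipschitz_diff bounded_W2_lipschitz_add bounded_W2_lipschitz_cmult
        dF_bounded_W2_lipschitz bounded_W2_lipschitz_log_ratio[OF bounded_W2_lipschitz_conv_fun_pi]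
        bounded_W2_lipschitz_KL[OF bounded_W2_lipschitz_conv_fun_pi])
qed

lemma bounded_W2_lipschitz_a3: "bounded_W2_lipschitz X X (a3 X dF \<sigma> K \<pi>)"
proof -
  obtain k where "0 < k" "\<And>\<mu> x. \<mu> \<in> probs X \<Longrightarrow> x \<in> X \<Longrightarrow> k \<le> conv_meas K X \<mu> x"
    using conv_meas_lower_bound by blast
  then have "bounded_W2_lipschitz X X (\<lambda>\<mu> x. 1 / conv_meas K X \<mu> x)"
    by (intro bounded_W2_lipschitz_compose[OF bounded_W2_lipschitz_conv_meas lipschitz_on_inverse])
      auto
  from bounded_W2_lipschitz_set_integral[OF compact_X bounded_W2_lipschitz_mult
        [OF bounded_W2_lipschitz_K_diff bounded_W2_lipschitz_snd[OF this]]]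
  have "bounded_W2_lipschitz X X (\<lambda>\<mu> x. LINT y:X|\<mu>. K (x - y) / conv_meas K X \<mu> y)"
    by simp
  moreover have "bounded_W2_lipschitz X X (\<lambda>\<mu> x. LINT z:X|\<mu>. ln (conv_meas K X \<mu> z / \<pi> z))"
    using bounded_W2_lipschitz_set_integral
        [OF compact_X bounded_W2_lipschitz_snd[OF bounded_W2_lipschitz_log_ratio_pi]]
    by simp
  ultimately show ?thesis
    unfolding a3_def[abs_def]
    by (intro bounded_W2_lipschitz_add bounded_W2_lipschitz_cmult bounded_W2_lipschitz_diff
        dF_bounded_W2_lipschitz bounded_W2_lipschitz_log_ratio_pi bounded_W2_lipschitz_const)
qed

lemma bounded_W2_lipschitz_a4: "bounded_W2_lipschitz X X (a4 X dF \<sigma> K \<pi>)"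
proof -
  have "bounded_W2_lipschitz X X
          (\<lambda>\<mu> x. conv_fun K X (\<lambda>z. ln (conv_meas K X \<mu> z / \<pi> z)) x)"
    using bounded_W2_lipschitz_set_integral_lborel[OF compact_X bounded_W2_lipschitz_mult
        [OF bounded_W2_lipschitz_K_diff
          bounded_W2_lipschitz_snd[OF bounded_W2_lipschitz_log_ratio_pi]]]
    by (simp add: conv_fun_def)
  then show ?thesis
    unfolding a4_def[abs_def]
    by (intro bounded_W2_lipschitz_diff bounded_W2_lipschitz_add bounded_W2_lipschitz_cmult
        dF_bounded_W2_lipschitz bounded_W2_lipschitz_KL_pi)
qed

end

lemma drifts_zero_kernel:
  assumes "\<And>z. K z = 0"
  shows "a1 X dF \<sigma> K \<pi> = dF" "a2 X dF \<sigma> K \<pi> = dF"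
    "a3 X dF \<sigma> K \<pi> = (\<lambda>\<mu> x. dF \<mu> x - \<sigma>)" "a4 X dF \<sigma> K \<pi> = dF"
  using assms
  by (simp_all add: fun_eq_iff a1_def a2_def a3_def a4_def conv_meas_def conv_fun_def KL_def)

lemma bounded_W2_lipschitz_drift:
  assumes "compact X" "bounded_W2_lipschitz X X dF" "lipschitz_kernel \<xi>" "0 < \<epsilon>"
    and "\<And>x. x \<in> X \<Longrightarrow> 0 < \<pi> x" "\<exists>L. L-lipschitz_on X \<pi>" "(LINT x:X|lborel. \<pi> x) = 1"
    and "a \<in> {a1 X dF \<sigma> (K_eps \<xi> X \<epsilon>) \<pi>, a2 X dF \<sigma> (K_eps \<xi> X \<epsilon>) \<pi>,
              a3 X dF \<sigma> (K_eps \<xi> X \<epsilon>) \<pi>, a4 X dF \<sigma> (K_eps \<xi> X \<epsilon>) \<pi>}"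
  shows "bounded_W2_lipschitz X X a"
  using K_eps_cases[OF assms(3,4), of X]
proof
  assume "\<forall>z. K_eps \<xi> X \<epsilon> z = 0"
  then show ?thesis
    using assms(2,8) bounded_W2_lipschitz_diff[OF assms(2) bounded_W2_lipschitz_const]
    by (auto simp: drifts_zero_kernel)
next
  assume "(\<forall>z. 0 < K_eps \<xi> X \<epsilon> z) \<and> (\<exists>L. L-lipschitz_on UNIV (K_eps \<xi> X \<epsilon>))"
  then interpret drift_setting X "K_eps \<xi> X \<epsilon>" \<pi> dF
    using assms by unfold_locales auto
  show ?thesis
    using assms(8) bounded_W2_lipschitz_a1 bounded_W2_lipschitz_a2 bounded_W2_lipschitz_a3
      bounded_W2_lipschitz_a4
    by blast
qed

theorem mainTheorem6:
  fixes X :: "'a::euclidean_space set"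
    and F :: "'a measure \<Rightarrow> real"
    and dF :: "'a measure \<Rightarrow> 'a \<Rightarrow> real"
    and \<xi> \<pi> U :: "'a \<Rightarrow> real"
    and \<epsilon> \<sigma> :: real
    and a :: "'a measure \<Rightarrow> 'a \<Rightarrow> real"
  assumes X_compact: "compact X"
    \<comment> \<open>assumptions on F\<close>
    and F_lsc: "\<And>\<mu>s \<mu>. (\<And>n. \<mu>s n \<in> probs X) \<Longrightarrow> \<mu> \<in> probs X \<Longrightarrow> weak_conv_meas \<mu>s \<mu> \<Longrightarrow>
                 ereal (F \<mu>) \<le> liminf (\<lambda>n. ereal (F (\<mu>s n)))"
    and F_below: "\<exists>F_min. \<forall>\<mu>\<in>probs X. F_min \<le> F \<mu>"
    and F_flat: "flat_derivative X F dF"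
    and dF_bdd: "\<exists>C_F. \<forall>\<mu>\<in>probs X. \<forall>x\<in>X. \<bar>dF \<mu> x\<bar> \<le> C_F"
    and dF_lip: "\<exists>L_F. \<forall>\<mu>\<in>probs X. \<forall>\<nu>\<in>probs X. \<forall>x\<in>X. \<forall>y\<in>X.
                   \<bar>dF \<mu> x - dF \<nu> y\<bar> \<le> L_F * (W2 \<mu> \<nu> + norm (x - y))"
    \<comment> \<open>assumptions on the kernel\<close>
    and xi_smooth: "smooth_fun \<xi>"
    and xi_lip: "\<exists>L. L-lipschitz_on UNIV \<xi>"
    and xi_radial: "\<And>x y. norm x = norm y \<Longrightarrow> \<xi> x = \<xi> y"
    and xi_nonneg: "\<And>x. \<xi> x \<ge> 0"
    and xi_integrable: "integrable lborel \<xi>"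
    and xi_prob: "(\<integral>x. \<xi> x \<partial>lborel) = 1"
    and xi_support: "closure {x. \<xi> x > 0} = UNIV"
    and xi_moment: "integrable lborel (\<lambda>x. (norm x)^2 * \<xi> x)"
    \<comment> \<open>assumptions on the target density\<close>
    and pi_exp: "\<And>x. x \<in> X \<Longrightarrow> \<pi> x = exp (- U x)"
    and U_cont: "continuous_on X U"
    and pi_integrable: "set_integrable lborel X \<pi>"
    and pi_prob: "(LINT x:X|lborel. \<pi> x) = 1"
    and pi_lip: "\<exists>L. L-lipschitz_on X \<pi>"
    \<comment> \<open>parameters\<close>
    and eps_pos: "\<epsilon> > 0"
    and sigma_pos: "\<sigma> > 0"
    and a_choice: "a \<in> {a1 X dF \<sigma> (K_eps \<xi> X \<epsilon>) \<pi>, a2 X dF \<sigma> (K_eps \<xi> X \<epsilon>) \<pi>,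
                        a3 X dF \<sigma> (K_eps \<xi> X \<epsilon>) \<pi>, a4 X dF \<sigma> (K_eps \<xi> X \<epsilon>) \<pi>}"
  shows "\<exists>M_a L_a. M_a > 0 \<and> L_a > 0 \<and>
           (\<forall>m\<in>probs2 X. \<forall>x\<in>X. \<bar>a m x\<bar> \<le> M_a) \<and>
           (\<forall>m\<in>probs2 X. \<forall>m'\<in>probs2 X. \<forall>x\<in>X. \<forall>y\<in>X.
               \<bar>a m x - a m' y\<bar> \<le> L_a * (norm (x - y) + W2 m m'))"
proof -
  \<comment> \<open>Not needed: the hypotheses on \<open>F\<close> itself, smoothness, radiality and normalisation
    of \<open>\<xi>\<close>, the sign of \<open>\<sigma>\<close>, and of \<open>\<pi> = exp (- U)\<close> anything beyond positivity.\<close>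
  have dF_bounded_W2_lipschitz: "bounded_W2_lipschitz X X dF"
    using dF_bdd dF_lip unfolding bounded_W2_lipschitz_def by (simp add: dist_norm add.commute)
  obtain L\<^sub>\<xi> where "L\<^sub>\<xi>-lipschitz_on UNIV \<xi>" using xi_lip by blast
  from lipschitz_kernelI_second_moment[OF xi_nonneg this xi_integrable xi_moment xi_support]
  have \<xi>: "lipschitz_kernel \<xi>" .
  have \<pi>_pos: "\<And>x. x \<in> X \<Longrightarrow> 0 < \<pi> x" using pi_exp by simp
  have "bounded_W2_lipschitz X X a"
    by (rule bounded_W2_lipschitz_drift[OF X_compact dF_bounded_W2_lipschitz \<xi> eps_pos \<pi>_pos
          pi_lip pi_prob a_choice])
  moreover have "probs2 X \<subseteq> probs X" unfolding probs2_def by blast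
  ultimately show ?thesis by (rule bounded_W2_lipschitz_bounds)
qed

end
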